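(* Let $h\in(0,2\pi)$, $\alpha>0$ and $T>0$ be constants. Let $k\colon[0,2\pi]\to(0,+\infty)$ be a twice continuously differentiable positive function with $k(0)=k(2\pi)$, $k'(0)=k'(2\pi)$, and let $\varphi\colon[-h,2\pi]\to[0,+\infty)$ be a twice continuously differentiable nonnegative function with $\int_0^{2\pi}\varphi(x)\,\mathrm{d}x=1$ and $\varphi(x)=\varphi(x+2\pi)$ for all $x\in[-h,0]$. Put $$\bar k=\max_{0\le x\le 2\pi}\max\{|k(x)|,|k'(x)|,|k''(x)|\}.$$ Define the sequence $(u^m)_{m\ge 0}$ of functions on $[0,2\pi]\times[0,T]$ by $u^0(x,t)=\varphi(x)$ and, for $m\ge0$, $u^{m+1}$ is the solution $v$ of the linear problem $$\frac{\partial v}{\partial t}-\alpha\frac{\partial^2 v}{\partial x^2}=\mathcal F u^m(x,t),\quad v(x,0)=\varphi(x),\quad v(0,t)=v(2\pi,t),\quad \frac{\partial v}{\partial x}(0,t)=\frac{\partial v}{\partial x}(2\pi,t),$$ for $0\le x\le 2\pi$, $0\le t\le T$, where $$\mathcal F u^m(x,t)=u^m(x,t)\bigl(k(x)\,u^m(x-h,t)-f[u^m(\cdot,t)]\bigr),\qquad f[u^m(\cdot,t)]=\int_0^{2\pi}k(x)\,u^m(x,t)\,u^m(x-h,t)\,\mathrm{d}x,$$ with the convention $u^m(x-h,t)=u^m(x-h+2\pi,t)$ whenever $x-h<0$. Then, if $\bar k$ is sufficiently small, the sequence of norms $\|u^m\|_{\mathbf C^{2,1}([0,2\pi]\times[0,T])}$,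 $m=0,1,2,\dots$, is uniformly bounded.
   Context: $\mathbf C^{2,1}([0,2\pi]\times[0,T])$ denotes the Banach space of continuous functions $w(x,t)$ on $[0,2\pi]\times[0,T]$ such that $\partial w/\partial x$, $\partial^2 w/\partial x^2$, $\partial w/\partial t$ are continuous on $[0,2\pi]\times[0,T]$ (continuity up to the boundary meaning the limits from the interior exist and are taken as boundary values), with norm $$\|w\|_{\mathbf C^{2,1}}=\max_{0\le x\le2\pi,\,0\le t\le T}\Bigl\{|w|+\Bigl|\tfrac{\partial w}{\partial x}\Bigr|+\Bigl|\tfrac{\partial^2 w}{\partial x^2}\Bigr|+\Bigl|\tfrac{\partial w}{\partial t}\Bigr|\Bigr\}.$$ $\mathbf C^{2}([0,2\pi])$ is defined analogously without $t$. "Sufficiently small" means: there is a threshold, depending on the remaining data ($\alpha$, $T$, $\varphi$), such that the conclusion holds whenever $\bar k$ is below it. *)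

theory Defs
  imports "HOL-Analysis.Analysis"
begin

definition rect :: "real \<Rightarrow> (real \<times> real) set" where
  "rect T = {0..2*pi} \<times> {0..T}"

definition C21_derivs ::
  "real \<Rightarrow> (real \<Rightarrow> real \<Rightarrow> real) \<Rightarrow> (real \<Rightarrow> real \<Rightarrow> real)
     \<Rightarrow> (real \<Rightarrow> real \<Rightarrow> real) \<Rightarrow> (real \<Rightarrow> real \<Rightarrow> real) \<Rightarrow> bool" where
  "C21_derivs T w wx wxx wt \<longleftrightarrow>
     continuous_on (rect T) (\<lambda>(x, t). w x t) \<and>
     continuous_on (rect T) (\<lambda>(x, t). wx x t) \<and>
     continuous_on (rect T) (\<lambda>(x, t). wxx x t) \<and>
     continuous_on (rect T) (\<lambda>(x, t). wt x t) \<and>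
     (\<forall>x t. 0 < x \<and> x < 2*pi \<and> 0 < t \<and> t < T \<longrightarrow>
        ((\<lambda>y. w y t) has_real_derivative wx x t) (at x) \<and>
        ((\<lambda>y. wx y t) has_real_derivative wxx x t) (at x) \<and>
        ((\<lambda>s. w x s) has_real_derivative wt x t) (at t))"

definition in_C21 :: "real \<Rightarrow> (real \<Rightarrow> real \<Rightarrow> real) \<Rightarrow> bool" where
  "in_C21 T w \<longleftrightarrow> (\<exists>wx wxx wt. C21_derivs T w wx wxx wt)"

text \<open>The C^{2,1} norm (the derivatives are uniquely determined on the rectangle).\<close>
definition C21_norm :: "real \<Rightarrow> (real \<Rightarrow> real \<Rightarrow> real) \<Rightarrow> real" where
  "C21_norm T w =
     (let d = (SOME d. C21_derivs T w (fst d) (fst (snd d)) (snd (snd d))) in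
      (SUP p\<in>rect T. \<bar>w (fst p) (snd p)\<bar> + \<bar>fst d (fst p) (snd p)\<bar>
          + \<bar>fst (snd d) (fst p) (snd p)\<bar> + \<bar>snd (snd d) (fst p) (snd p)\<bar>))"

definition shifted :: "real \<Rightarrow> (real \<Rightarrow> real \<Rightarrow> real) \<Rightarrow> real \<Rightarrow> real \<Rightarrow> real" where
  "shifted h u x t = (if x - h < 0 then u (x - h + 2*pi) t else u (x - h) t)"

definition fterm :: "(real \<Rightarrow> real) \<Rightarrow> real \<Rightarrow> (real \<Rightarrow> real \<Rightarrow> real) \<Rightarrow> real \<Rightarrow> real" where
  "fterm k h u t = integral {0..2*pi} (\<lambda>x. k x * u x t * shifted h u x t)"

definition Fop :: "(real \<Rightarrow> real) \<Rightarrow> real \<Rightarrow> (real \<Rightarrow> real \<Rightarrow> real) \<Rightarrow> real \<Rightarrow> real \<Rightarrow> real" where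
  "Fop k h u x t = u x t * (k x * shifted h u x t - fterm k h u t)"

definition solves_linear ::
  "real \<Rightarrow> real \<Rightarrow> (real \<Rightarrow> real) \<Rightarrow> (real \<Rightarrow> real \<Rightarrow> real) \<Rightarrow> (real \<Rightarrow> real \<Rightarrow> real) \<Rightarrow> bool" where
  "solves_linear \<alpha> T \<phi> g v \<longleftrightarrow>
     (\<exists>vx vxx vt. C21_derivs T v vx vxx vt \<and>
        (\<forall>x t. 0 \<le> x \<and> x \<le> 2*pi \<and> 0 \<le> t \<and> t \<le> T \<longrightarrow>
            vt x t - \<alpha> * vxx x t = g x t) \<and>
        (\<forall>x. 0 \<le> x \<and> x \<le> 2*pi \<longrightarrow> v x 0 = \<phi> x) \<and>
        (\<forall>t. 0 \<le> t \<and> t \<le> T \<longrightarrow> v 0 t = v (2*pi) t \<and> vx 0 t = vx (2*pi) t))"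

end

theory Submission
  imports Defs
begin

text \<open>
  Extend every iterate \<open>2\<pi>\<close>-periodically in \<open>x\<close>. A classical periodic solution of
  \<open>W\<^sub>t - \<alpha> W\<^sub>x\<^sub>x = G\<close> obeys the maximum principle
  \<open>\<bar>W(\<cdot>,t)\<bar> \<le> sup \<bar>W(\<cdot>,0)\<bar> + t sup \<bar>G\<bar>\<close>. The equation commutes with translations in \<open>x\<close>,
  so the same estimate holds for the second differences \<open>W(x+d,t) - 2W(x,t) + W(x-d,t)\<close>; divided by
  \<open>d\<^sup>2\<close> they bound \<open>W\<^sub>x\<^sub>x\<close> by \<open>2 sup \<bar>\<phi>''\<bar> + 2t Lip(G\<^sub>x)\<close>, and since \<open>W\<^sub>x\<close> has a zero
  in every period this also bounds \<open>W\<^sub>x\<close>.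

  The invariant of the iteration is that for \<open>0 < t < T\<close> the slice \<open>u\<^sup>m(\<cdot>,t)\<close> has
  \<open>C\<^sup>1\<^sup>,\<^sup>1\<close> bounds \<open>R\<close>: \<open>\<bar>u\<bar>, \<bar>u\<^sub>x\<bar> \<le> R\<close> and \<open>u\<^sub>x\<close> is \<open>R\<close>-Lipschitz. Then
  \<open>\<F>u\<^sup>m(\<cdot>,t)\<close> has \<open>C\<^sup>1\<^sup>,\<^sup>1\<close> bounds \<open>32 K R\<^sup>3\<close>, where \<open>K\<close> bounds \<open>k, k', k''\<close>, and the
  estimates above give back the bounds \<open>R\<close> for \<open>u\<^sup>m\<^sup>+\<^sup>1\<close> once \<open>512 T K R\<^sup>3 \<le> 1\<close>,
  with \<open>R = 17 P + 1\<close> and \<open>P\<close> bounding \<open>\<phi>, \<phi>', \<phi>''\<close>. The equation itself then bounds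
  \<open>u\<^sub>t\<close>, hence the whole \<open>C\<^sup>2\<^sup>,\<^sup>1\<close> norm.
\<close>

section \<open>One-variable calculus\<close>

lemma DERIV_within_Icc_of_interior:
  fixes f f' :: "real \<Rightarrow> real"
  assumes "a < b" and cf: "continuous_on {a..b} f" and cf': "continuous_on {a..b} f'"
    and der: "\<And>x. a < x \<Longrightarrow> x < b \<Longrightarrow> (f has_real_derivative f' x) (at x)"
    and x: "x \<in> {a..b}"
  shows "(f has_real_derivative f' x) (at x within {a..b})"
proof -
  have FTC: "f a + integral {a..y} f' = f y" if y: "y \<in> {a..b}" for y
  proof -
    have "(f' has_integral (f y - f a)) {a..y}"
    proof (rule fundamental_theorem_of_calculus_interior)
      show "continuous_on {a..y} f" using y by (intro continuous_on_subset[OF cf]) auto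
      show "(f has_vector_derivative f' z) (at z)" if "z \<in> {a<..<y}" for z
        using der[of z] that y by (simp add: has_real_derivative_iff_has_vector_derivative)
    qed (use y in simp)
    then show ?thesis by (simp add: integral_unique)
  qed
  have "((\<lambda>y. f a + integral {a..y} f') has_real_derivative f' x) (at x within {a..b})"
    using integral_has_real_derivative[OF cf' x] by (auto intro!: derivative_eq_intros)
  then show ?thesis
    by (rule has_field_derivative_transform_within[OF _ zero_less_one x]) (simp add: FTC)
qed

lemma DERIV_at_of_one_sided:
  fixes f :: "real \<Rightarrow> real"
  assumes "a < x" "x < b"
    and "(f has_real_derivative D) (at x within {a..x})"
    and "(f has_real_derivative D) (at x within {x..b})"
  shows "(f has_real_derivative D) (at x)"
proof -
  have "(f has_real_derivative D) (at x within {a..x} \<union> {x..b})"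
    using assms(3,4) unfolding has_field_derivative_iff Lim_within_Un by blast
  moreover have "{a..x} \<union> {x..b} = {a..b}" using assms(1,2) by auto
  ultimately show ?thesis using at_within_Icc_at[OF assms(1,2)] by simp
qed

lemma MVT_interior:
  fixes f f' :: "real \<Rightarrow> real"
  assumes "a < b" and "continuous_on {a..b} f"
    and der: "\<And>x. a < x \<Longrightarrow> x < b \<Longrightarrow> (f has_real_derivative f' x) (at x)"
  obtains z where "a < z" "z < b" "f b - f a = (b - a) * f' z"
proof -
  obtain l z where z: "a < z" "z < b" "DERIV f z :> l" "f b - f a = (b - a) * l"
    using MVT[OF assms(1,2)] der unfolding real_differentiable_def by blast
  then have "l = f' z" using DERIV_unique der by blast
  with z that show ?thesis by blast
qed

lemma lipschitz_on_Icc_of_DERIV_bound: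
  fixes f f' :: "real \<Rightarrow> real"
  assumes cf: "continuous_on {a..b} f"
    and der: "\<And>x. a < x \<Longrightarrow> x < b \<Longrightarrow> (f has_real_derivative f' x) (at x)"
    and bound: "\<And>x. a < x \<Longrightarrow> x < b \<Longrightarrow> \<bar>f' x\<bar> \<le> B"
    and x: "x \<in> {a..b}" and y: "y \<in> {a..b}"
  shows "\<bar>f x - f y\<bar> \<le> B * \<bar>x - y\<bar>"
proof -
  have ordered: "\<bar>f x - f y\<bar> \<le> B * \<bar>x - y\<bar>" if "x < y" "x \<in> {a..b}" "y \<in> {a..b}" for x y
  proof -
    have cont: "continuous_on {x..y} f" using that by (intro continuous_on_subset[OF cf]) auto
    have der': "(f has_real_derivative f' w) (at w)" if "x < w" "w < y" for w
      using der that \<open>x \<in> {a..b}\<close> \<open>y \<in> {a..b}\<close> by simp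
    obtain z where z: "x < z" "z < y" "f y - f x = (y - x) * f' z"
      using MVT_interior[OF \<open>x < y\<close> cont der'] by blast
    have "\<bar>f x - f y\<bar> = \<bar>y - x\<bar> * \<bar>f' z\<bar>" using z(3) by (metis abs_minus_commute abs_mult)
    then have "\<bar>f x - f y\<bar> = (y - x) * \<bar>f' z\<bar>" using \<open>x < y\<close> by simp
    also have "\<dots> \<le> (y - x) * B" using bound[of z] z that by (intro mult_left_mono) auto
    finally show ?thesis using that by (simp add: mult.commute)
  qed
  show ?thesis
  proof (cases x y rule: linorder_cases)
    case less
    then show ?thesis using ordered x y by blast
  next
    case greater
    then show ?thesis using ordered[of y x] x y by (simp add: abs_minus_commute)
  qed simp
qed

lemma lipschitz_of_DERIV_bound:
  fixes f f' :: "real \<Rightarrow> real"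
  assumes der: "\<And>x. (f has_real_derivative f' x) (at x)" and bound: "\<And>x. \<bar>f' x\<bar> \<le> B"
  shows "\<bar>f x - f y\<bar> \<le> B * \<bar>x - y\<bar>"
proof (rule lipschitz_on_Icc_of_DERIV_bound[OF _ der bound])
  show "continuous_on {min x y - 1..max x y + 1} f"
    by (intro continuous_at_imp_continuous_on ballI DERIV_continuous[OF der])
qed auto

lemma DERIV_abs_le_lipschitz:
  fixes f :: "real \<Rightarrow> real"
  assumes der: "(f has_real_derivative D) (at x)" and lip: "\<And>y. \<bar>f y - f x\<bar> \<le> L * \<bar>y - x\<bar>"
  shows "\<bar>D\<bar> \<le> L"
proof (rule tendsto_upperbound)
  show "((\<lambda>h. \<bar>(f (x + h) - f x) / h\<bar>) \<longlongrightarrow> \<bar>D\<bar>) (at 0)"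
    using DERIV_D[OF der] by (rule tendsto_rabs)
  have "\<bar>(f (x + h) - f x) / h\<bar> \<le> L" if "h \<noteq> 0" for h
    using lip[of "x + h"] that by (simp add: abs_divide divide_le_eq)
  then show "\<forall>\<^sub>F h in at 0. \<bar>(f (x + h) - f x) / h\<bar> \<le> L"
    by (auto simp: eventually_at_filter)
qed simp

lemma periodic_DERIV_bound:
  fixes f f' :: "real \<Rightarrow> real"
  assumes der: "\<And>y. (f has_real_derivative f' y) (at y)"
    and periodic: "f (x + p) = f x" and "0 < p"
    and lip: "\<And>y z. \<bar>f' y - f' z\<bar> \<le> L * \<bar>y - z\<bar>"
  shows "\<bar>f' x\<bar> \<le> L * p"
proof -
  have "x < x + p" using \<open>0 < p\<close> by simp
  then obtain z where z: "x < z" "z < x + p" "f (x + p) - f x = (x + p - x) * f' z"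
    using MVT_interior[OF _ continuous_at_imp_continuous_on[OF ballI[OF DERIV_isCont[OF der]]] der]
    by blast
  then have "f' z = 0" using periodic \<open>0 < p\<close> by simp
  moreover have "0 \<le> L" using lip[of 1 0] by simp
  ultimately show ?thesis
    using lip[of x z] z mult_left_mono[of "\<bar>x - z\<bar>" p L] by simp
qed

lemma DERIV_nonpos_at_max:
  fixes f f' :: "real \<Rightarrow> real"
  assumes der: "\<And>y. (f has_real_derivative f' y) (at y)"
    and der2: "(f' has_real_derivative c) (at x)"
    and max: "\<And>y. f y \<le> f x"
  shows "c \<le> 0"
proof (rule ccontr)
  assume "\<not> c \<le> 0"
  then obtain d where d: "d > 0" "\<And>h. h > 0 \<Longrightarrow> h < d \<Longrightarrow> f' x < f' (x + h)"
    using DERIV_pos_inc_right[OF der2] by auto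
  have "f' x = 0" using DERIV_local_max[OF der zero_less_one] max by blast
  have "continuous_on {x..x + d/2} f"
    by (intro continuous_at_imp_continuous_on ballI DERIV_continuous[OF der])
  then obtain z where z: "x < z" "z < x + d/2" "f (x + d/2) - f x = (x + d/2 - x) * f' z"
    using MVT_interior[of x "x + d/2" f f'] der d(1) by auto
  have "0 < f' z" using d(2)[of "z - x"] z \<open>f' x = 0\<close> by simp
  then have "0 < (x + d/2 - x) * f' z" using d(1) by simp
  then have "f x < f (x + d/2)" using z(3) by linarith
  then show False using max[of "x + d/2"] by simp
qed

lemma DERIV_nonneg_at_left_max:
  fixes g :: "real \<Rightarrow> real"
  assumes der: "(g has_real_derivative c) (at t)" and "a < t"
    and max: "\<And>s. a \<le> s \<Longrightarrow> s \<le> t \<Longrightarrow> g s \<le> g t"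
  shows "0 \<le> c"
proof (rule ccontr)
  assume "\<not> 0 \<le> c"
  then obtain e where e: "e > 0" "\<And>h. h > 0 \<Longrightarrow> h < e \<Longrightarrow> g t < g (t - h)"
    using DERIV_neg_dec_left[OF der] by auto
  define h where "h = min e (t - a) / 2"
  have "h > 0" "h < e" "h \<le> t - a" using e \<open>a < t\<close> unfolding h_def by auto
  then show False using e(2)[of h] max[of "t - h"] by simp
qed

lemma DERIV_endpoints_eq_of_periodic:
  fixes f f' :: "real \<Rightarrow> real"
  assumes der: "\<And>x. x \<in> {-h..2*pi} \<Longrightarrow> (f has_real_derivative f' x) (at x within {-h..2*pi})"
    and periodic: "\<And>x. x \<in> {-h..0} \<Longrightarrow> f x = f (x + 2*pi)" and "0 < h"
  shows "f' 0 = f' (2*pi)"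
proof -
  have "(f has_real_derivative f' 0) (at 0 within {-h..0})"
    using DERIV_subset[OF der[of 0], of "{-h..0}"] \<open>0 < h\<close> by simp
  moreover have "(f has_real_derivative f' (2*pi)) (at 0 within {-h..0})"
  proof -
    have "(f has_real_derivative f' (2*pi)) (at (0 + 2*pi) within (\<lambda>x. x + 2*pi) ` {-h..0})"
      using DERIV_subset[OF der[of "2*pi"], of "(\<lambda>x. x + 2*pi) ` {-h..0}"] \<open>0 < h\<close> pi_gt_zero
      by simp
    then have "((f \<circ> (\<lambda>x. x + 2*pi)) has_real_derivative f' (2*pi) * 1) (at 0 within {-h..0})"
      by (rule DERIV_image_chain) (auto intro!: derivative_eq_intros)
    moreover have "(f \<circ> (\<lambda>x. x + 2*pi)) x = f x" if "x \<in> {-h..0}" for x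
      using periodic[OF that] by simp
    ultimately show ?thesis
      using has_field_derivative_transform_within[OF _ zero_less_one, of _ _ 0 "{-h..0}"] \<open>0 < h\<close>
      by force
  qed
  moreover have "at (0::real) within {-h..0} \<noteq> bot" using \<open>0 < h\<close> by (simp add: at_within_Icc_at_left)
  ultimately show ?thesis
    using tendsto_unique unfolding has_field_derivative_iff by blast
qed

lemma continuous_eq_on_Icc:
  fixes f g :: "real \<Rightarrow> real"
  assumes "a < b" "continuous_on {a..b} f" "continuous_on {a..b} g"
    and eq: "\<And>x. a < x \<Longrightarrow> x < b \<Longrightarrow> f x = g x" and x: "x \<in> {a..b}"
  shows "f x = g x"
proof -
  have "closure {a<..<b} = {a..b}" using \<open>a < b\<close> by simp
  then have "continuous_on (closure {a<..<b}) (\<lambda>x. f x - g x)" "x \<in> closure {a<..<b}"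
    using assms(2,3) x by (auto intro!: continuous_intros)
  from continuous_constant_on_closure[OF this(1) _ this(2), of 0] eq show ?thesis by simp
qed

lemma continuous_on_slice_x:
  assumes "continuous_on (A \<times> B) (\<lambda>(x, t). v x t)" "t \<in> B"
  shows "continuous_on A (\<lambda>x. v x t)"
proof -
  have "continuous_on A (\<lambda>x. (\<lambda>(x, t). v x t) (x, t))"
    by (rule continuous_on_compose2[OF assms(1)]) (use assms(2) in \<open>auto intro!: continuous_intros\<close>)
  then show ?thesis by simp
qed

lemma continuous_on_slice_t:
  assumes "continuous_on (A \<times> B) (\<lambda>(x, t). v x t)" "x \<in> A"
  shows "continuous_on B (\<lambda>t. v x t)"
proof -
  have "continuous_on B (\<lambda>t. (\<lambda>(x, t). v x t) (x, t))"
    by (rule continuous_on_compose2[OF assms(1)]) (use assms(2) in \<open>auto intro!: continuous_intros\<close>)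
  then show ?thesis by simp
qed

definition second_diff :: "(real \<Rightarrow> real) \<Rightarrow> real \<Rightarrow> real \<Rightarrow> real" where
  "second_diff f d x = f (x + d) - 2 * f x + f (x - d)"

lemma second_diff_DERIV:
  assumes "\<And>y. (f has_real_derivative f' y) (at y)"
  shows "((\<lambda>y. second_diff f d y) has_real_derivative second_diff f' d x) (at x)"
proof -
  have "((\<lambda>y. f (y + c)) has_real_derivative f' (x + c)) (at x)" for c
    using DERIV_shift assms by blast
  from this[of d] this[of "- d"] show ?thesis
    unfolding second_diff_def by (intro DERIV_add DERIV_diff DERIV_cmult assms) simp_all
qed

lemma second_diff_quotient_tendsto:
  fixes f f' :: "real \<Rightarrow> real"
  assumes der: "\<And>y. (f has_real_derivative f' y) (at y)"
    and der2: "(f' has_real_derivative c) (at x)"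
  shows "((\<lambda>d. second_diff f d x / d^2) \<longlongrightarrow> c) (at_right 0)"
proof (rule lhopital_right_0)
  define q where "q d = f' (x + d) - f' (x - d)" for d
  have dq: "((\<lambda>d. second_diff f d x) has_real_derivative q d) (at d)" for d
  proof -
    have a: "((\<lambda>s. f (x + s)) has_real_derivative f' (x + d) * 1) (at d)"
      by (rule DERIV_chain2[where f=f and g="\<lambda>s. x + s", OF der]) (auto intro!: derivative_eq_intros)
    have b: "((\<lambda>s. f (x - s)) has_real_derivative f' (x - d) * (- 1)) (at d)"
      by (rule DERIV_chain2[where f=f and g="\<lambda>s. x - s", OF der]) (auto intro!: derivative_eq_intros)
    show ?thesis
      unfolding second_diff_def q_def using DERIV_add[OF DERIV_diff[OF a DERIV_const] b] by simp
  qed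
  then show "\<forall>\<^sub>F d in at_right 0. ((\<lambda>d. second_diff f d x) has_real_derivative q d) (at d)"
    by simp
  have "((\<lambda>d. second_diff f d x) \<longlongrightarrow> second_diff f 0 x) (at 0)"
    using DERIV_isCont[OF dq] by (simp add: isCont_def)
  then show "((\<lambda>d. second_diff f d x) \<longlongrightarrow> 0) (at_right 0)"
    unfolding filterlim_at_split by (simp add: second_diff_def)
  show "((\<lambda>d. d^2) \<longlongrightarrow> 0) (at_right (0::real))"
    by (rule tendsto_eq_intros refl)+ simp
  show "\<forall>\<^sub>F d in at_right 0. d^2 \<noteq> (0::real)" "\<forall>\<^sub>F d in at_right 0. 2 * d \<noteq> (0::real)"
    using eventually_at_right_less[of 0] by (auto elim!: eventually_mono)
  show "\<forall>\<^sub>F d in at_right 0. ((\<lambda>d. d^2) has_real_derivative 2 * d) (at d)"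
    by (rule always_eventually) (auto intro!: derivative_eq_intros)
  have "((\<lambda>s. f' (x - s)) has_real_derivative c * (- 1)) (at 0)"
    by (rule DERIV_chain2[where f=f' and g="\<lambda>s. x - s"]) (use der2 in \<open>auto intro!: derivative_eq_intros\<close>)
  from DERIV_D[OF this] have "((\<lambda>h. (f' (x - h) - f' x) / h) \<longlongrightarrow> - c) (at 0)" by simp
  then have "((\<lambda>h. ((f' (x + h) - f' x) / h - (f' (x - h) - f' x) / h) / 2) \<longlongrightarrow> (c - - c) / 2) (at 0)"
    by (intro tendsto_intros DERIV_D[OF der2]) simp_all
  then have "((\<lambda>h. ((f' (x + h) - f' x) / h - (f' (x - h) - f' x) / h) / 2) \<longlongrightarrow> c) (at_right 0)"
    unfolding filterlim_at_split by simp
  moreover have "\<forall>\<^sub>F h in at_right 0. ((f' (x + h) - f' x) / h - (f' (x - h) - f' x) / h) / 2 = q h / (2 * h)"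
    using eventually_at_right_less[of 0] by eventually_elim (simp add: q_def field_simps)
  ultimately show "((\<lambda>d. q d / (2 * d)) \<longlongrightarrow> c) (at_right 0)"
    by (rule Lim_transform_eventually)
qed

lemma DERIV2_bound_of_second_diff:
  fixes f f' :: "real \<Rightarrow> real"
  assumes der: "\<And>y. (f has_real_derivative f' y) (at y)"
    and der2: "(f' has_real_derivative c) (at x)"
    and "0 < e" and bound: "\<And>d. 0 < d \<Longrightarrow> d < e \<Longrightarrow> \<bar>second_diff f d x\<bar> \<le> K * d^2"
  shows "\<bar>c\<bar> \<le> K"
proof (rule tendsto_upperbound)
  show "((\<lambda>d. \<bar>second_diff f d x / d^2\<bar>) \<longlongrightarrow> \<bar>c\<bar>) (at_right 0)"
    by (intro tendsto_rabs second_diff_quotient_tendsto[OF der der2])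
  have "\<forall>\<^sub>F d in at_right 0. 0 < d \<and> d < e"
    unfolding eventually_at_right[OF \<open>0 < e\<close>] using \<open>0 < e\<close> by auto
  then show "\<forall>\<^sub>F d in at_right 0. \<bar>second_diff f d x / d^2\<bar> \<le> K"
    by eventually_elim (use bound in \<open>simp add: abs_divide divide_le_eq\<close>)
qed simp

section \<open>Periodic extension\<close>

definition mod2pi :: "real \<Rightarrow> real" where
  "mod2pi x = 2*pi * frac (x / (2*pi))"

definition periodic_ext :: "(real \<Rightarrow> 'a) \<Rightarrow> real \<Rightarrow> 'a" where
  "periodic_ext f x = f (mod2pi x)"

lemma mod2pi_bounds: "0 \<le> mod2pi x" "mod2pi x < 2*pi"
  using frac_lt_1[of "x / (2*pi)"] by (simp_all add: mod2pi_def)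

lemma period_index_bounds:
  "2*pi * of_int \<lfloor>x / (2*pi)\<rfloor> \<le> x" "x < 2*pi * of_int \<lfloor>x / (2*pi)\<rfloor> + 2*pi"
  using mod2pi_bounds[of x] by (simp_all add: mod2pi_def frac_def algebra_simps)

lemma mod2pi_eq:
  assumes "2*pi * of_int n \<le> x" "x < 2*pi * of_int n + 2*pi"
  shows "mod2pi x = x - 2*pi * of_int n"
proof -
  have "\<lfloor>x / (2*pi)\<rfloor> = n"
    using assms by (intro floor_unique) (simp_all add: field_simps)
  then show ?thesis by (simp add: mod2pi_def frac_def field_simps)
qed

lemma mod2pi_id: "0 \<le> x \<Longrightarrow> x < 2*pi \<Longrightarrow> mod2pi x = x"
  using mod2pi_eq[of 0 x] by simp

lemma mod2pi_add_int: "mod2pi (x + 2*pi * of_int n) = mod2pi x"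
proof -
  have "(x + 2*pi * of_int n) / (2*pi) = x / (2*pi) + of_int n" by (simp add: field_simps)
  then show ?thesis by (simp add: mod2pi_def)
qed

lemma mod2pi_add_mod2pi: "mod2pi (mod2pi x + c) = mod2pi (x + c)"
proof -
  have "(mod2pi x + c) / (2*pi) = frac (x / (2*pi)) + c / (2*pi)"
    "(x + c) / (2*pi) = x / (2*pi) + c / (2*pi)"
    by (simp_all add: mod2pi_def field_simps)
  then show ?thesis by (simp add: mod2pi_def)
qed

lemma mod2pi_idem [simp]: "mod2pi (mod2pi x) = mod2pi x"
  using mod2pi_add_mod2pi[of x 0] by simp

lemma periodic_ext_eq: "0 \<le> x \<Longrightarrow> x < 2*pi \<Longrightarrow> periodic_ext f x = f x"
  by (simp add: periodic_ext_def mod2pi_id)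

lemma periodic_ext_add_int: "periodic_ext f (x + 2*pi * of_int n) = periodic_ext f x"
  by (simp add: periodic_ext_def mod2pi_add_int)

lemma periodic_ext_at_int: "periodic_ext f (2*pi * of_int n) = f 0"
  using periodic_ext_add_int[of f 0 n] by (simp add: periodic_ext_eq)

lemma periodic_ext_on_period:
  assumes "2*pi * of_int n \<le> x" "x \<le> 2*pi * of_int n + 2*pi" and f: "f 0 = f (2*pi)"
  shows "periodic_ext f x = f (x - 2*pi * of_int n)"
proof (cases "x < 2*pi * of_int n + 2*pi")
  case True
  then show ?thesis using assms(1) by (simp add: periodic_ext_def mod2pi_eq)
next
  case False
  then have "x = 2*pi * of_int (n + 1)" using assms(2) by (simp add: algebra_simps)
  then show ?thesis using f periodic_ext_at_int[of f "n + 1"] by (simp add: algebra_simps)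
qed

lemma periodic_ext_eq_closed: "0 \<le> x \<Longrightarrow> x \<le> 2*pi \<Longrightarrow> f 0 = f (2*pi) \<Longrightarrow> periodic_ext f x = f x"
  using periodic_ext_on_period[of 0 x f] by simp

lemma periodic_ext_cases:
  obtains y where "0 \<le> y" "y \<le> 2*pi" "periodic_ext f x = f y"
  using mod2pi_bounds[of x] by (auto simp: periodic_ext_def)

lemma periodic_ext_DERIV_within_period:
  fixes f f' :: "real \<Rightarrow> real"
  assumes der: "\<And>z. z \<in> {0..2*pi} \<Longrightarrow> (f has_real_derivative f' z) (at z within {0..2*pi})"
    and f: "f 0 = f (2*pi)" and f': "f' 0 = f' (2*pi)"
    and x: "x \<in> {2*pi * of_int n..2*pi * of_int n + 2*pi}"
  shows "(periodic_ext f has_real_derivative periodic_ext f' x)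
           (at x within {2*pi * of_int n..2*pi * of_int n + 2*pi})"
proof -
  let ?I = "{2*pi * of_int n..2*pi * of_int n + 2*pi}" and ?s = "\<lambda>z. z - 2*pi * of_int n"
  have "?s ` ?I = {0..2*pi}" by simp
  then have "(f has_real_derivative f' (?s x)) (at (?s x) within ?s ` ?I)"
    using der[of "?s x"] x by simp
  then have "((f \<circ> ?s) has_real_derivative f' (?s x) * 1) (at x within ?I)"
    by (rule DERIV_image_chain) (auto intro!: derivative_eq_intros)
  moreover have "periodic_ext f' x = f' (?s x)" using periodic_ext_on_period[OF _ _ f'] x by auto
  moreover have "(f \<circ> ?s) z = periodic_ext f z" if "z \<in> ?I" for z
    using periodic_ext_on_period[OF _ _ f] that by auto
  ultimately show ?thesis
    using has_field_derivative_transform_within[OF _ zero_less_one x] by fastforce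
qed

lemma periodic_ext_DERIV:
  fixes f f' :: "real \<Rightarrow> real"
  assumes der: "\<And>z. z \<in> {0..2*pi} \<Longrightarrow> (f has_real_derivative f' z) (at z within {0..2*pi})"
    and f: "f 0 = f (2*pi)" and f': "f' 0 = f' (2*pi)"
  shows "(periodic_ext f has_real_derivative periodic_ext f' x) (at x)"
proof -
  define n where "n = \<lfloor>x / (2*pi)\<rfloor>"
  note n = period_index_bounds[of x, folded n_def]
  note on_period = periodic_ext_DERIV_within_period[OF der f f']
  show ?thesis
  proof (cases "x = 2*pi * of_int n")
    case True
    show ?thesis
    proof (rule DERIV_at_of_one_sided)
      show "(periodic_ext f has_real_derivative periodic_ext f' x) (at x within {x - 2*pi..x})"
        using on_period[of x "n - 1"] True by (simp add: algebra_simps)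
      show "(periodic_ext f has_real_derivative periodic_ext f' x) (at x within {x..x + 2*pi})"
        using on_period[of x n] True by simp
    qed simp_all
  next
    case False
    then have "at x within {2*pi * of_int n..2*pi * of_int n + 2*pi} = at x"
      using n by (intro at_within_Icc_at) auto
    then show ?thesis using on_period[of x n] n by simp
  qed
qed

lemma periodic_ext_DERIV_of_interior:
  fixes f f' :: "real \<Rightarrow> real"
  assumes "continuous_on {0..2*pi} f" "continuous_on {0..2*pi} f'"
    and "\<And>x. 0 < x \<Longrightarrow> x < 2*pi \<Longrightarrow> (f has_real_derivative f' x) (at x)"
    and "f 0 = f (2*pi)" "f' 0 = f' (2*pi)"
  shows "(periodic_ext f has_real_derivative periodic_ext f' x) (at x)"
  using assms by (intro periodic_ext_DERIV DERIV_within_Icc_of_interior) auto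

lemma periodic_ext_lipschitz_on_period:
  fixes f f' :: "real \<Rightarrow> real"
  assumes cf: "continuous_on {0..2*pi} f"
    and der: "\<And>x. 0 < x \<Longrightarrow> x < 2*pi \<Longrightarrow> (f has_real_derivative f' x) (at x)"
    and bound: "\<And>x. 0 < x \<Longrightarrow> x < 2*pi \<Longrightarrow> \<bar>f' x\<bar> \<le> L"
    and f: "f 0 = f (2*pi)"
    and x: "x \<in> {2*pi * of_int n..2*pi * of_int n + 2*pi}" and y: "y \<in> {2*pi * of_int n..2*pi * of_int n + 2*pi}"
  shows "\<bar>periodic_ext f x - periodic_ext f y\<bar> \<le> L * \<bar>x - y\<bar>"
proof -
  have "periodic_ext f x = f (x - 2*pi * of_int n)" "periodic_ext f y = f (y - 2*pi * of_int n)"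
    using x y periodic_ext_on_period[OF _ _ f] by auto
  then show ?thesis
    using lipschitz_on_Icc_of_DERIV_bound[OF cf der bound, of "x - 2*pi * of_int n" "y - 2*pi * of_int n"] x y
    by simp
qed

lemma periodic_ext_lipschitz:
  fixes f f' :: "real \<Rightarrow> real"
  assumes cf: "continuous_on {0..2*pi} f"
    and der: "\<And>x. 0 < x \<Longrightarrow> x < 2*pi \<Longrightarrow> (f has_real_derivative f' x) (at x)"
    and bound: "\<And>x. 0 < x \<Longrightarrow> x < 2*pi \<Longrightarrow> \<bar>f' x\<bar> \<le> L"
    and f: "f 0 = f (2*pi)"
  shows "\<bar>periodic_ext f x - periodic_ext f y\<bar> \<le> L * \<bar>x - y\<bar>"
proof -
  note on_period = periodic_ext_lipschitz_on_period[OF cf der bound f]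
  have "0 \<le> L" using bound[of pi] by simp
  have ordered: "\<bar>periodic_ext f x - periodic_ext f y\<bar> \<le> L * \<bar>x - y\<bar>" if "x \<le> y" for x y
  proof -
    define n m where "n = \<lfloor>x / (2*pi)\<rfloor>" and "m = \<lfloor>y / (2*pi)\<rfloor>"
    note n = period_index_bounds[of x, folded n_def] and m = period_index_bounds[of y, folded m_def]
    have "n \<le> m" unfolding n_def m_def using that by (intro floor_mono divide_right_mono) auto
    show ?thesis
    proof (cases "n = m")
      case True
      then show ?thesis using on_period[of x n y] n m by simp
    next
      case False
      \<comment> \<open>Pass through the grid points \<open>2\<pi>(n + 1) \<le> 2\<pi>m\<close>, where the extension takes the same value.\<close>
      then have "2*pi * of_int (n + 1) \<le> 2*pi * of_int m" using \<open>n \<le> m\<close> by simp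
      have "\<bar>periodic_ext f x - periodic_ext f y\<bar>
          \<le> \<bar>periodic_ext f x - periodic_ext f (2*pi * of_int (n + 1))\<bar>
            + \<bar>periodic_ext f (2*pi * of_int m) - periodic_ext f y\<bar>"
        using periodic_ext_at_int[of f "n + 1"] periodic_ext_at_int[of f m] by linarith
      also have "\<dots> \<le> L * (2*pi * of_int (n + 1) - x) + L * (y - 2*pi * of_int m)"
        using on_period[of x n "2*pi * of_int (n + 1)"] on_period[of "2*pi * of_int m" m y] n m
        by (intro add_mono) (auto simp: algebra_simps)
      also have "\<dots> = L * ((2*pi * of_int (n + 1) - x) + (y - 2*pi * of_int m))"
        by (simp only: distrib_left)
      also have "\<dots> \<le> L * \<bar>x - y\<bar>"
        using \<open>0 \<le> L\<close> \<open>2*pi * of_int (n + 1) \<le> 2*pi * of_int m\<close> that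
        by (intro mult_left_mono) auto
      finally show ?thesis .
    qed
  qed
  show ?thesis
    using ordered[of x y] ordered[of y x] by (cases "x \<le> y") (auto simp: abs_minus_commute)
qed

lemma continuous_on_periodic_ext:
  fixes v :: "real \<Rightarrow> real \<Rightarrow> real"
  assumes cv: "continuous_on ({0..2*pi} \<times> {0..T}) (\<lambda>(x, t). v x t)"
    and bc: "\<And>t. t \<in> {0..T} \<Longrightarrow> v 0 t = v (2*pi) t"
  shows "continuous_on (UNIV \<times> {0..T}) (\<lambda>(x, t). periodic_ext (\<lambda>y. v y t) x)"
proof -
  let ?F = "\<lambda>(x, t). periodic_ext (\<lambda>y. v y t) x"
  let ?I = "\<lambda>n::int. {2*pi * of_int n..2*pi * of_int n + 2*pi} \<times> {0..T}"
  have strip: "continuous_on (?I n) ?F" for n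
  proof -
    have "continuous_on (?I n) (\<lambda>p. (\<lambda>(x, t). v x t) ((\<lambda>(x, t). (x - 2*pi * of_int n, t)) p))"
      by (rule continuous_on_compose2[OF cv]) (auto simp: case_prod_beta intro!: continuous_intros)
    moreover have "?F p = (\<lambda>(x, t). v x t) ((\<lambda>(x, t). (x - 2*pi * of_int n, t)) p)" if "p \<in> ?I n" for p
      using that periodic_ext_on_period[of n "fst p" "\<lambda>y. v y (snd p)"] bc by (auto simp: case_prod_beta)
    ultimately show ?thesis using continuous_on_eq by force
  qed
  show ?thesis
    unfolding continuous_on_eq_continuous_within
  proof
    fix p :: "real \<times> real" assume p: "p \<in> UNIV \<times> {0..T}"
    define n where "n = \<lfloor>fst p / (2*pi)\<rfloor>"
    note n = period_index_bounds[of "fst p", folded n_def]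
    let ?N = "{2*pi * of_int (n - 1)<..<2*pi * of_int (n + 1)} \<times> (UNIV :: real set)"
    have "continuous_on (?I (n - 1) \<union> ?I n) ?F"
      by (intro continuous_on_closed_Un strip closed_Times) auto
    moreover have "p \<in> ?I n" using p n by (auto simp: mem_Times_iff)
    ultimately have "continuous (at p within ?I (n - 1) \<union> ?I n) ?F"
      by (simp add: continuous_on_eq_continuous_within)
    moreover have "at p within UNIV \<times> {0..T} = at p within ?I (n - 1) \<union> ?I n"
    proof (rule at_within_nhd[of _ ?N])
      show "p \<in> ?N" using n by (auto simp: mem_Times_iff algebra_simps)
      show "(UNIV \<times> {0..T}) \<inter> ?N - {p} = (?I (n - 1) \<union> ?I n) \<inter> ?N - {p}"
        by (auto simp: algebra_simps)
    qed (auto intro: open_Times)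
    ultimately show "continuous (at p within UNIV \<times> {0..T}) ?F" by simp
  qed
qed

section \<open>\<open>C\<^sup>1\<^sup>,\<^sup>1\<close> bounds\<close>

definition C11_bounds :: "(real \<Rightarrow> real) \<Rightarrow> (real \<Rightarrow> real) \<Rightarrow> real \<Rightarrow> real \<Rightarrow> real \<Rightarrow> bool" where
  "C11_bounds f f' a b c \<longleftrightarrow> (\<forall>x. (f has_real_derivative f' x) (at x)) \<and> (\<forall>x. \<bar>f x\<bar> \<le> a) \<and>
     (\<forall>x. \<bar>f' x\<bar> \<le> b) \<and> (\<forall>x y. \<bar>f' x - f' y\<bar> \<le> c * \<bar>x - y\<bar>)"

lemma C11_boundsD:
  assumes "C11_bounds f f' a b c"
  shows "(f has_real_derivative f' x) (at x)" "\<bar>f x\<bar> \<le> a" "\<bar>f' x\<bar> \<le> b"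
    "\<bar>f' x - f' y\<bar> \<le> c * \<bar>x - y\<bar>"
  using assms unfolding C11_bounds_def by blast+

lemma C11_bounds_lipschitz: "C11_bounds f f' a b c \<Longrightarrow> \<bar>f x - f y\<bar> \<le> b * \<bar>x - y\<bar>"
  by (intro lipschitz_of_DERIV_bound) (auto dest: C11_boundsD)

lemma C11_bounds_nonneg:
  assumes "C11_bounds f f' a b c"
  shows "0 \<le> a" "0 \<le> b" "0 \<le> c"
  using C11_boundsD[OF assms, of 0] C11_boundsD(4)[OF assms, of 1 0] by auto

lemma C11_bounds_mono:
  assumes "C11_bounds f f' a b c" "a \<le> a'" "b \<le> b'" "c \<le> c'"
  shows "C11_bounds f f' a' b' c'"
  unfolding C11_bounds_def
proof (intro conjI allI)
  fix x y
  show "(f has_real_derivative f' x) (at x)" "\<bar>f x\<bar> \<le> a'" "\<bar>f' x\<bar> \<le> b'"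
    using C11_boundsD[OF assms(1), of x] assms(2,3) by auto
  have "c * \<bar>x - y\<bar> \<le> c' * \<bar>x - y\<bar>" using assms(4) by (intro mult_right_mono) auto
  then show "\<bar>f' x - f' y\<bar> \<le> c' * \<bar>x - y\<bar>" using C11_boundsD(4)[OF assms(1), of x y] by linarith
qed

lemma C11_bounds_const: "C11_bounds (\<lambda>_. k) (\<lambda>_. 0) \<bar>k\<bar> 0 0"
  unfolding C11_bounds_def by auto

lemma C11_bounds_diff:
  assumes f: "C11_bounds f f' a1 b1 c1" and g: "C11_bounds g g' a2 b2 c2"
  shows "C11_bounds (\<lambda>x. f x - g x) (\<lambda>x. f' x - g' x) (a1 + a2) (b1 + b2) (c1 + c2)"
  unfolding C11_bounds_def
proof (intro conjI allI)
  fix x y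
  note F = C11_boundsD[OF f] and G = C11_boundsD[OF g]
  show "((\<lambda>x. f x - g x) has_real_derivative f' x - g' x) (at x)"
    using F(1) G(1) by (rule DERIV_diff)
  show "\<bar>f x - g x\<bar> \<le> a1 + a2" "\<bar>f' x - g' x\<bar> \<le> b1 + b2"
    using F(2,3)[of x] G(2,3)[of x] by linarith+
  show "\<bar>f' x - g' x - (f' y - g' y)\<bar> \<le> (c1 + c2) * \<bar>x - y\<bar>"
    using F(4)[of x y] G(4)[of x y] by (simp add: distrib_right)
qed

lemma C11_bounds_shift:
  assumes "C11_bounds f f' a b c"
  shows "C11_bounds (\<lambda>x. f (x - h)) (\<lambda>x. f' (x - h)) a b c"
  unfolding C11_bounds_def
proof (intro conjI allI)
  fix x y
  note F = C11_boundsD[OF assms]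
  show "((\<lambda>x. f (x - h)) has_real_derivative f' (x - h)) (at x)"
    using DERIV_shift[of f "f' (x - h)" x "- h"] F(1) by simp
  show "\<bar>f (x - h)\<bar> \<le> a" "\<bar>f' (x - h)\<bar> \<le> b" using F(2,3) by blast+
  show "\<bar>f' (x - h) - f' (y - h)\<bar> \<le> c * \<bar>x - y\<bar>" using F(4)[of "x - h" "y - h"] by simp
qed

lemma C11_bounds_mult:
  assumes f: "C11_bounds f f' a1 b1 c1" and g: "C11_bounds g g' a2 b2 c2"
  shows "C11_bounds (\<lambda>x. f x * g x) (\<lambda>x. f' x * g x + f x * g' x)
           (a1 * a2) (b1 * a2 + a1 * b2) (c1 * a2 + 2 * b1 * b2 + a1 * c2)"
  unfolding C11_bounds_def
proof (intro conjI allI)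
  fix x y
  note F = C11_boundsD[OF f] and G = C11_boundsD[OF g]
  note g0 = C11_bounds_nonneg[OF g]
  have prod: "\<bar>p * q\<bar> \<le> A * B" if "\<bar>p\<bar> \<le> A" "\<bar>q\<bar> \<le> B" "0 \<le> B" for p q A B :: real
    unfolding abs_mult using that by (intro mult_mono) auto
  show "((\<lambda>x. f x * g x) has_real_derivative f' x * g x + f x * g' x) (at x)"
    using F(1) G(1) by (auto intro!: derivative_eq_intros)
  show "\<bar>f x * g x\<bar> \<le> a1 * a2" by (rule prod[OF F(2) G(2) g0(1)])
  show "\<bar>f' x * g x + f x * g' x\<bar> \<le> b1 * a2 + a1 * b2"
    by (rule order_trans[OF abs_triangle_ineq add_mono[OF prod[OF F(3) G(2) g0(1)] prod[OF F(2) G(3) g0(2)]]])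
  let ?d = "\<bar>x - y\<bar>"
  have "f' x * g x + f x * g' x - (f' y * g y + f y * g' y)
      = (f' x - f' y) * g x + f' y * (g x - g y) + (f x - f y) * g' x + f y * (g' x - g' y)"
    by (simp add: algebra_simps)
  then have "\<bar>f' x * g x + f x * g' x - (f' y * g y + f y * g' y)\<bar>
      \<le> \<bar>(f' x - f' y) * g x\<bar> + \<bar>f' y * (g x - g y)\<bar> + \<bar>(f x - f y) * g' x\<bar>
        + \<bar>f y * (g' x - g' y)\<bar>"
    by linarith
  also have "\<dots> \<le> (c1 * ?d) * a2 + b1 * (b2 * ?d) + (b1 * ?d) * b2 + a1 * (c2 * ?d)"
  proof (intro add_mono)
    show "\<bar>(f' x - f' y) * g x\<bar> \<le> (c1 * ?d) * a2" by (rule prod[OF F(4) G(2) g0(1)])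
    show "\<bar>f' y * (g x - g y)\<bar> \<le> b1 * (b2 * ?d)"
      using g0 by (intro prod[OF F(3) C11_bounds_lipschitz[OF g]]) simp
    show "\<bar>(f x - f y) * g' x\<bar> \<le> (b1 * ?d) * b2"
      by (rule prod[OF C11_bounds_lipschitz[OF f] G(3) g0(2)])
    show "\<bar>f y * (g' x - g' y)\<bar> \<le> a1 * (c2 * ?d)"
      using g0 by (intro prod[OF F(2) G(4)]) simp
  qed
  also have "\<dots> = (c1 * a2 + 2 * b1 * b2 + a1 * c2) * ?d" by (simp add: algebra_simps)
  finally show "\<bar>f' x * g x + f x * g' x - (f' y * g y + f y * g' y)\<bar>
      \<le> (c1 * a2 + 2 * b1 * b2 + a1 * c2) * ?d" .
qed

lemma C11_bounds_second_diff:
  assumes f: "C11_bounds f f' a b c" and "0 < d"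
  shows "\<bar>second_diff f d x\<bar> \<le> 2 * c * d^2"
proof -
  define \<psi> where "\<psi> s = f (x + s) + f (x - s)" for s
  have der: "(\<psi> has_real_derivative f' (x + s) - f' (x - s)) (at s)" for s
  proof -
    have "((\<lambda>s. f (x + s)) has_real_derivative f' (x + s) * 1) (at s)"
      by (rule DERIV_chain2[OF C11_boundsD(1)[OF f]]) (auto intro!: derivative_eq_intros)
    moreover have "((\<lambda>s. f (x - s)) has_real_derivative f' (x - s) * (- 1)) (at s)"
      by (rule DERIV_chain2[OF C11_boundsD(1)[OF f]]) (auto intro!: derivative_eq_intros)
    ultimately show ?thesis unfolding \<psi>_def using DERIV_add by fastforce
  qed
  obtain z where z: "0 < z" "z < d" "\<psi> d - \<psi> 0 = (d - 0) * (f' (x + z) - f' (x - z))"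
    using MVT_interior[OF \<open>0 < d\<close> continuous_at_imp_continuous_on[OF ballI[OF DERIV_isCont[OF der]]] der]
    by blast
  have "\<bar>f' (x + z) - f' (x - z)\<bar> \<le> c * (2 * d)"
    using C11_boundsD(4)[OF f, of "x + z" "x - z"] C11_bounds_nonneg(3)[OF f] z
    by (smt (verit) mult_left_mono)
  then have "\<bar>\<psi> d - \<psi> 0\<bar> \<le> d * (c * (2 * d))"
    using z(3) \<open>0 < d\<close> by (simp add: abs_mult mult_left_mono)
  then show ?thesis unfolding \<psi>_def second_diff_def by (simp add: power2_eq_square algebra_simps)
qed

lemma C11_bounds_periodic_ext:
  fixes f f1 f2 :: "real \<Rightarrow> real"
  assumes d1: "\<And>x. x \<in> {0..2*pi} \<Longrightarrow> (f has_real_derivative f1 x) (at x within {0..2*pi})"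
    and d2: "\<And>x. x \<in> {0..2*pi} \<Longrightarrow> (f1 has_real_derivative f2 x) (at x within {0..2*pi})"
    and f: "f 0 = f (2*pi)" and f1: "f1 0 = f1 (2*pi)"
    and a: "\<And>x. x \<in> {0..2*pi} \<Longrightarrow> \<bar>f x\<bar> \<le> a"
    and b: "\<And>x. x \<in> {0..2*pi} \<Longrightarrow> \<bar>f1 x\<bar> \<le> b"
    and c: "\<And>x. x \<in> {0..2*pi} \<Longrightarrow> \<bar>f2 x\<bar> \<le> c"
  shows "C11_bounds (periodic_ext f) (periodic_ext f1) a b c"
  unfolding C11_bounds_def
proof (intro conjI allI)
  fix x y
  show "(periodic_ext f has_real_derivative periodic_ext f1 x) (at x)"
    by (rule periodic_ext_DERIV[OF d1 f f1])
  show "\<bar>periodic_ext f x\<bar> \<le> a" "\<bar>periodic_ext f1 x\<bar> \<le> b"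
    by (rule periodic_ext_cases[of f x], simp add: a) (rule periodic_ext_cases[of f1 x], simp add: b)
  show "\<bar>periodic_ext f1 x - periodic_ext f1 y\<bar> \<le> c * \<bar>x - y\<bar>"
  proof (rule periodic_ext_lipschitz[OF DERIV_continuous_on[OF d2] _ _ f1])
    show "(f1 has_real_derivative f2 z) (at z)" if "0 < z" "z < 2*pi" for z
      using d2[of z] that at_within_Icc_at[of 0 z "2*pi"] by simp
  qed (auto intro: c)
qed

lemma C11_bounds_periodic_ext_Sup:
  fixes f f1 f2 :: "real \<Rightarrow> real"
  assumes d1: "\<And>x. x \<in> {0..2*pi} \<Longrightarrow> (f has_real_derivative f1 x) (at x within {0..2*pi})"
    and d2: "\<And>x. x \<in> {0..2*pi} \<Longrightarrow> (f1 has_real_derivative f2 x) (at x within {0..2*pi})"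
    and c2: "continuous_on {0..2*pi} f2" and f: "f 0 = f (2*pi)" and f1: "f1 0 = f1 (2*pi)"
  defines "M \<equiv> SUP x\<in>{0..2*pi}. max \<bar>f x\<bar> (max \<bar>f1 x\<bar> \<bar>f2 x\<bar>)"
  shows "C11_bounds (periodic_ext f) (periodic_ext f1) M M M"
proof -
  let ?m = "\<lambda>x. max \<bar>f x\<bar> (max \<bar>f1 x\<bar> \<bar>f2 x\<bar>)"
  have "continuous_on {0..2*pi} ?m"
    using DERIV_continuous_on[OF d1] DERIV_continuous_on[OF d2] c2 by (intro continuous_intros)
  then have "bdd_above (?m ` {0..2*pi})"
    by (intro bounded_imp_bdd_above compact_imp_bounded compact_continuous_image) auto
  then have "?m x \<le> M" if "x \<in> {0..2*pi}" for x
    unfolding M_def using that by (rule cSUP_upper[rotated])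
  then have "\<bar>f x\<bar> \<le> M \<and> \<bar>f1 x\<bar> \<le> M \<and> \<bar>f2 x\<bar> \<le> M" if "x \<in> {0..2*pi}" for x
    using that by simp
  then show ?thesis by (intro C11_bounds_periodic_ext[OF d1 d2 f f1]) blast+
qed

section \<open>The maximum principle for periodic solutions of the heat equation\<close>

definition periodic_heat_solution ::
  "real \<Rightarrow> real \<Rightarrow> (real \<Rightarrow> real \<Rightarrow> real) \<Rightarrow> (real \<Rightarrow> real \<Rightarrow> real) \<Rightarrow> (real \<Rightarrow> real \<Rightarrow> real)
     \<Rightarrow> (real \<Rightarrow> real \<Rightarrow> real) \<Rightarrow> (real \<Rightarrow> real \<Rightarrow> real) \<Rightarrow> bool" where
  "periodic_heat_solution \<alpha> T W Wx Wxx Wt G \<longleftrightarrow>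
     continuous_on (UNIV \<times> {0..T}) (\<lambda>(x, t). W x t) \<and>
     (\<forall>x t. W (mod2pi x) t = W x t) \<and>
     (\<forall>x t. 0 < t \<and> t < T \<longrightarrow>
        ((\<lambda>y. W y t) has_real_derivative Wx x t) (at x) \<and>
        ((\<lambda>y. Wx y t) has_real_derivative Wxx x t) (at x) \<and>
        ((\<lambda>s. W x s) has_real_derivative Wt x t) (at t) \<and>
        Wt x t - \<alpha> * Wxx x t = G x t)"

lemma periodic_heat_solutionD:
  assumes "periodic_heat_solution \<alpha> T W Wx Wxx Wt G"
  shows "continuous_on (UNIV \<times> {0..T}) (\<lambda>(x, t). W x t)" "W (mod2pi x) t = W x t"
    and "0 < t \<Longrightarrow> t < T \<Longrightarrow> ((\<lambda>y. W y t) has_real_derivative Wx x t) (at x)"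
    and "0 < t \<Longrightarrow> t < T \<Longrightarrow> ((\<lambda>y. Wx y t) has_real_derivative Wxx x t) (at x)"
    and "0 < t \<Longrightarrow> t < T \<Longrightarrow> ((\<lambda>s. W x s) has_real_derivative Wt x t) (at t)"
    and "0 < t \<Longrightarrow> t < T \<Longrightarrow> Wt x t - \<alpha> * Wxx x t = G x t"
  using assms unfolding periodic_heat_solution_def by blast+

lemma periodic_heat_solution_uminus:
  assumes sol: "periodic_heat_solution \<alpha> T W Wx Wxx Wt G"
  shows "periodic_heat_solution \<alpha> T (\<lambda>x t. - W x t) (\<lambda>x t. - Wx x t) (\<lambda>x t. - Wxx x t)
           (\<lambda>x t. - Wt x t) (\<lambda>x t. - G x t)"
  unfolding periodic_heat_solution_def
proof (intro conjI allI impI)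
  note W = periodic_heat_solutionD[OF sol]
  show "continuous_on (UNIV \<times> {0..T}) (\<lambda>(x, t). - W x t)"
    using continuous_on_minus[OF W(1)] by (simp add: case_prod_beta)
  fix x t
  show "- W (mod2pi x) t = - W x t" using W(2) by simp
  assume t: "0 < t \<and> t < T"
  then show "((\<lambda>y. - W y t) has_real_derivative - Wx x t) (at x)"
    "((\<lambda>y. - Wx y t) has_real_derivative - Wxx x t) (at x)"
    "((\<lambda>s. - W x s) has_real_derivative - Wt x t) (at t)"
    using W(3-5) by (auto intro: DERIV_minus)
  show "- Wt x t - \<alpha> * - Wxx x t = - G x t" using W(6)[of t x] t by simp
qed

lemma periodic_heat_solution_second_diff:
  assumes sol: "periodic_heat_solution \<alpha> T W Wx Wxx Wt G"
  shows "periodic_heat_solution \<alpha> T (\<lambda>x t. second_diff (\<lambda>y. W y t) d x)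
           (\<lambda>x t. second_diff (\<lambda>y. Wx y t) d x) (\<lambda>x t. second_diff (\<lambda>y. Wxx y t) d x)
           (\<lambda>x t. second_diff (\<lambda>y. Wt y t) d x) (\<lambda>x t. second_diff (\<lambda>y. G y t) d x)"
  unfolding periodic_heat_solution_def
proof (intro conjI allI impI)
  note W = periodic_heat_solutionD[OF sol]
  have shift: "continuous_on (UNIV \<times> {0..T}) (\<lambda>p. W (fst p + c) (snd p))" for c
  proof -
    have "continuous_on (UNIV \<times> {0..T}) (\<lambda>p. (\<lambda>(x, t). W x t) ((\<lambda>(x, t). (x + c, t)) p))"
      by (rule continuous_on_compose2[OF W(1)]) (auto simp: case_prod_beta intro!: continuous_intros)
    then show ?thesis by (simp add: case_prod_beta)
  qed
  have "continuous_on (UNIV \<times> {0..T})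
      (\<lambda>p. W (fst p + d) (snd p) - 2 * W (fst p + 0) (snd p) + W (fst p + - d) (snd p))"
    by (intro continuous_on_add continuous_on_diff continuous_on_mult_left shift)
  then show "continuous_on (UNIV \<times> {0..T}) (\<lambda>(x, t). second_diff (\<lambda>y. W y t) d x)"
    by (simp add: second_diff_def case_prod_beta)
  fix x t
  have "W (mod2pi x + c) t = W (x + c) t" for c
    using W(2)[of "mod2pi x + c" t] W(2)[of "x + c" t] by (simp add: mod2pi_add_mod2pi)
  from this[of d] this[of "- d"] W(2)[of x t]
  show "second_diff (\<lambda>y. W y t) d (mod2pi x) = second_diff (\<lambda>y. W y t) d x"
    by (simp add: second_diff_def)
  assume "0 < t \<and> t < T"
  then have t: "0 < t" "t < T" by auto
  show "((\<lambda>y. second_diff (\<lambda>y. W y t) d y) has_real_derivative second_diff (\<lambda>y. Wx y t) d x) (at x)"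
    by (rule second_diff_DERIV[OF W(3)[OF t]])
  show "((\<lambda>y. second_diff (\<lambda>y. Wx y t) d y) has_real_derivative second_diff (\<lambda>y. Wxx y t) d x) (at x)"
    by (rule second_diff_DERIV[OF W(4)[OF t]])
  show "((\<lambda>s. second_diff (\<lambda>y. W y s) d x) has_real_derivative second_diff (\<lambda>y. Wt y t) d x) (at t)"
    unfolding second_diff_def by (intro DERIV_add DERIV_diff DERIV_cmult W(5)[OF t])
  show "second_diff (\<lambda>y. Wt y t) d x - \<alpha> * second_diff (\<lambda>y. Wxx y t) d x = second_diff (\<lambda>y. G y t) d x"
    unfolding second_diff_def using W(6)[OF t, of "x + d"] W(6)[OF t, of x] W(6)[OF t, of "x - d"]
    by (simp add: algebra_simps)
qed

lemma max_principle_strict: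
  assumes sol: "periodic_heat_solution \<alpha> T W Wx Wxx Wt G" and "0 < \<alpha>"
    and G: "\<And>x t. 0 < t \<Longrightarrow> t < T \<Longrightarrow> G x t < S"
    and W0: "\<And>x. W x 0 \<le> B"
    and t: "0 \<le> t" "t < T"
  shows "W x t \<le> B + S * t"
proof -
  note W = periodic_heat_solutionD[OF sol]
  define Z where "Z p = W (fst p) (snd p) - S * snd p" for p
  define K where "K = {0..2*pi} \<times> {0..t}"
  have "K \<subseteq> UNIV \<times> {0..T}" using t unfolding K_def by auto
  then have "continuous_on K (\<lambda>p. W (fst p) (snd p))"
    using continuous_on_subset[OF W(1)] by (simp add: case_prod_beta)
  then have "continuous_on K Z" unfolding Z_def by (intro continuous_intros)
  moreover have "compact K" "K \<noteq> {}" using t unfolding K_def by (auto intro: compact_Times)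
  ultimately obtain xm tm where p: "(xm, tm) \<in> K" and max: "\<And>q. q \<in> K \<Longrightarrow> Z q \<le> Z (xm, tm)"
    using continuous_attains_sup by (metis surj_pair)
  have in_K: "(mod2pi y, s) \<in> K" if "0 \<le> s" "s \<le> t" for y s
    using mod2pi_bounds[of y] that unfolding K_def by auto
  have "Z (xm, tm) \<le> B"
  proof (cases "tm = 0")
    case True
    then show ?thesis using W0[of xm] unfolding Z_def by simp
  next
    case False
    \<comment> \<open>At a maximum of \<open>W - S t\<close> at positive time, \<open>W\<^sub>x\<^sub>x \<le> 0 \<le> W\<^sub>t - S\<close>, so \<open>G \<ge> S\<close>.\<close>
    then have tm: "0 < tm" "tm < T" using p t unfolding K_def by auto
    have "W y tm \<le> W xm tm" for y
      using max[OF in_K[of tm y]] p W(2)[of y tm] unfolding K_def Z_def by auto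
    then have "Wxx xm tm \<le> 0" by (rule DERIV_nonpos_at_max[OF W(3)[OF tm] W(4)[OF tm]])
    moreover have "0 \<le> Wt xm tm - S"
    proof (rule DERIV_nonneg_at_left_max[of "\<lambda>s. W xm s - S * s" _ tm 0])
      show "((\<lambda>s. W xm s - S * s) has_real_derivative Wt xm tm - S) (at tm)"
        using W(5)[OF tm] by (auto intro!: derivative_eq_intros)
      show "W xm s - S * s \<le> W xm tm - S * tm" if "0 \<le> s" "s \<le> tm" for s
        using max[of "(xm, s)"] p that unfolding K_def Z_def by auto
    qed (use tm in simp)
    ultimately have "S \<le> G xm tm"
      using W(6)[OF tm, of xm] \<open>0 < \<alpha>\<close> mult_nonneg_nonpos[of \<alpha> "Wxx xm tm"] by linarith
    then show ?thesis using G[OF tm, of xm] by simp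
  qed
  then show ?thesis using max[OF in_K[of t x]] t W(2)[of x t] unfolding Z_def by simp
qed

lemma max_principle_upper:
  assumes sol: "periodic_heat_solution \<alpha> T W Wx Wxx Wt G" and "0 < \<alpha>"
    and G: "\<And>x t. 0 < t \<Longrightarrow> t < T \<Longrightarrow> G x t \<le> S"
    and W0: "\<And>x. W x 0 \<le> B"
    and t: "0 \<le> t" "t < T"
  shows "W x t \<le> B + S * t"
proof (rule field_le_epsilon)
  fix e :: real assume "0 < e"
  then have "0 < e / (t + 1)" using t by simp
  then have "G y s < S + e / (t + 1)" if "0 < s" "s < T" for y s
    using G[OF that, of y] by linarith
  then have "W x t \<le> B + (S + e / (t + 1)) * t"
    by (rule max_principle_strict[OF sol \<open>0 < \<alpha>\<close> _ W0 t])
  also have "\<dots> \<le> B + S * t + e"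
    using \<open>0 < e\<close> t by (simp add: field_simps)
  finally show "W x t \<le> B + S * t + e" .
qed

lemma max_principle:
  assumes sol: "periodic_heat_solution \<alpha> T W Wx Wxx Wt G" and "0 < \<alpha>"
    and G: "\<And>x t. 0 < t \<Longrightarrow> t < T \<Longrightarrow> \<bar>G x t\<bar> \<le> S"
    and W0: "\<And>x. \<bar>W x 0\<bar> \<le> B"
    and t: "0 \<le> t" "t < T"
  shows "\<bar>W x t\<bar> \<le> B + S * t"
proof -
  have "W x t \<le> B + S * t"
    by (rule max_principle_upper[OF sol \<open>0 < \<alpha>\<close> _ _ t]) (use G W0 in \<open>auto simp: abs_le_iff\<close>)
  moreover have "- W x t \<le> B + S * t"
    by (rule max_principle_upper[OF periodic_heat_solution_uminus[OF sol] \<open>0 < \<alpha>\<close> _ _ t])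
       (use G W0 in \<open>auto simp: abs_le_iff\<close>)
  ultimately show ?thesis by (simp add: abs_le_iff)
qed

lemma periodic_heat_solution_bounds:
  assumes sol: "periodic_heat_solution \<alpha> T W Wx Wxx Wt G" and "0 < \<alpha>"
    and init: "C11_bounds (\<lambda>x. W x 0) W0' P0 P1 P2"
    and forcing: "\<And>t. 0 < t \<Longrightarrow> t < T \<Longrightarrow> \<exists>G'. C11_bounds (\<lambda>x. G x t) G' S S S"
    and t: "0 \<le> t" "t < T"
  shows "\<bar>W x t\<bar> \<le> P0 + S * t"
    and "0 < d \<Longrightarrow> \<bar>second_diff (\<lambda>y. W y t) d x\<bar> \<le> (2*P2 + 2*S*t) * d^2"
proof -
  have G: "\<bar>G x s\<bar> \<le> S" and G_diff: "0 < d \<Longrightarrow> \<bar>second_diff (\<lambda>y. G y s) d x\<bar> \<le> 2 * S * d^2"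
    if s: "0 < s" "s < T" for x s d
  proof -
    obtain G' where g: "C11_bounds (\<lambda>x. G x s) G' S S S" using forcing[OF s] by blast
    show "\<bar>G x s\<bar> \<le> S" by (rule C11_boundsD(2)[OF g])
    show "0 < d \<Longrightarrow> \<bar>second_diff (\<lambda>y. G y s) d x\<bar> \<le> 2 * S * d^2" by (rule C11_bounds_second_diff[OF g])
  qed
  show "\<bar>W x t\<bar> \<le> P0 + S * t"
    by (rule max_principle[OF sol \<open>0 < \<alpha>\<close> G C11_boundsD(2)[OF init] t])
  assume "0 < d"
  then have "\<bar>second_diff (\<lambda>y. G y s) d x\<bar> \<le> 2 * S * d^2" if "0 < s" "s < T" for x s
    using G_diff[OF that] by blast
  then have "\<bar>second_diff (\<lambda>y. W y t) d x\<bar> \<le> 2 * P2 * d^2 + 2 * S * d^2 * t"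
    by (rule max_principle[OF periodic_heat_solution_second_diff[OF sol] \<open>0 < \<alpha>\<close> _
          C11_bounds_second_diff[OF init \<open>0 < d\<close>] t])
  then show "\<bar>second_diff (\<lambda>y. W y t) d x\<bar> \<le> (2*P2 + 2*S*t) * d^2"
    by (simp add: algebra_simps)
qed

lemma periodic_heat_solution_C11_estimate:
  assumes sol: "periodic_heat_solution \<alpha> T W Wx Wxx Wt G" and "0 < \<alpha>"
    and init: "C11_bounds (\<lambda>x. W x 0) W0' P0 P1 P2"
    and forcing: "\<And>t. 0 < t \<Longrightarrow> t < T \<Longrightarrow> \<exists>G'. C11_bounds (\<lambda>x. G x t) G' S S S"
    and t: "0 < t" "t < T"
  shows "C11_bounds (\<lambda>x. W x t) (\<lambda>x. Wx x t) (P0 + S * T) (2*pi * (2*P2 + 2*S*T)) (2*P2 + 2*S*T)"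
proof -
  note W = periodic_heat_solutionD[OF sol]
  have W_t: "\<bar>W x t\<bar> \<le> P0 + S * t" for x
    by (rule periodic_heat_solution_bounds(1)[OF sol \<open>0 < \<alpha>\<close> init]) (use forcing t in auto)
  have diff_t: "\<bar>second_diff (\<lambda>y. W y t) d x\<bar> \<le> (2*P2 + 2*S*t) * d^2" if "0 < d" for d x
    by (rule periodic_heat_solution_bounds(2)[OF sol \<open>0 < \<alpha>\<close> init _ _ _ that]) (use forcing t in auto)
  obtain G' where "C11_bounds (\<lambda>x. G x t) G' S S S" using forcing[OF t] by blast
  then have "0 \<le> S" by (rule C11_bounds_nonneg(1))
  then have St: "S * t \<le> S * T" using t by (intro mult_left_mono) auto
  have W_bound: "\<bar>W x t\<bar> \<le> P0 + S * T" for x using W_t[of x] St by linarith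
  have Wxx: "\<bar>Wxx x t\<bar> \<le> 2*P2 + 2*S*T" for x
  proof (rule DERIV2_bound_of_second_diff[OF W(3)[OF t] W(4)[OF t] zero_less_one])
    fix d :: real assume "0 < d"
    then show "\<bar>second_diff (\<lambda>y. W y t) d x\<bar> \<le> (2*P2 + 2*S*T) * d^2"
      using diff_t[OF \<open>0 < d\<close>, of x] mult_right_mono[OF St, of "2 * d^2"] by (simp add: algebra_simps)
  qed
  have lip: "\<bar>Wx x t - Wx y t\<bar> \<le> (2*P2 + 2*S*T) * \<bar>x - y\<bar>" for x y
    using lipschitz_of_DERIV_bound[OF W(4)[OF t] Wxx] .
  have periodic: "W (x + 2*pi) t = W x t" for x
    using W(2)[of "x + 2*pi" t] W(2)[of x t] mod2pi_add_int[of x 1] by simp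
  have "\<bar>Wx x t\<bar> \<le> (2*P2 + 2*S*T) * (2*pi)" for x
    by (rule periodic_DERIV_bound[OF W(3)[OF t] periodic _ lip]) simp
  then have Wx_bound: "\<bar>Wx x t\<bar> \<le> 2*pi * (2*P2 + 2*S*T)" for x by (simp add: mult.commute)
  show ?thesis
    unfolding C11_bounds_def by (intro conjI allI W(3)[OF t] W_bound Wx_bound lip)
qed

section \<open>Classical solutions of the linear problem\<close>

lemma C21_derivsD:
  assumes "C21_derivs T v vx vxx vt"
  shows "continuous_on ({0..2*pi} \<times> {0..T}) (\<lambda>(x, t). v x t)"
    "continuous_on ({0..2*pi} \<times> {0..T}) (\<lambda>(x, t). vx x t)"
    "continuous_on ({0..2*pi} \<times> {0..T}) (\<lambda>(x, t). vxx x t)"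
    "continuous_on ({0..2*pi} \<times> {0..T}) (\<lambda>(x, t). vt x t)"
    and "0 < x \<Longrightarrow> x < 2*pi \<Longrightarrow> 0 < t \<Longrightarrow> t < T \<Longrightarrow> ((\<lambda>y. v y t) has_real_derivative vx x t) (at x)"
    and "0 < x \<Longrightarrow> x < 2*pi \<Longrightarrow> 0 < t \<Longrightarrow> t < T \<Longrightarrow> ((\<lambda>y. vx y t) has_real_derivative vxx x t) (at x)"
    and "0 < x \<Longrightarrow> x < 2*pi \<Longrightarrow> 0 < t \<Longrightarrow> t < T \<Longrightarrow> ((\<lambda>s. v x s) has_real_derivative vt x t) (at t)"
  using assms unfolding C21_derivs_def rect_def by blast+

lemma C21_time_FTC:
  assumes C: "C21_derivs T v vx vxx vt" and x: "x \<in> {0..2*pi}"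
    and s: "0 < a" "a \<le> s" "s < T"
  shows "v x a + integral {a..s} (\<lambda>r. vt x r) = v x s"
proof (rule continuous_eq_on_Icc[where f="\<lambda>x. v x a + integral {a..s} (\<lambda>r. vt x r)", OF _ _ _ _ x])
  note V = C21_derivsD[OF C]
  have sub: "{0..2*pi} \<times> {a..s} \<subseteq> {0..2*pi} \<times> {0..T}" using s by auto
  have "continuous_on {0..2*pi} (\<lambda>x. integral (cbox a s) (\<lambda>r. vt x r))"
    by (rule integral_continuous_on_param) (use continuous_on_subset[OF V(4) sub] in simp)
  then show "continuous_on {0..2*pi} (\<lambda>x. v x a + integral {a..s} (\<lambda>r. vt x r))"
    using continuous_on_slice_x[OF V(1), of a] s by (auto intro!: continuous_intros simp: cbox_interval)
  show "continuous_on {0..2*pi} (\<lambda>x. v x s)" using continuous_on_slice_x[OF V(1), of s] s by simp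
  show "v y a + integral {a..s} (\<lambda>r. vt y r) = v y s" if "0 < y" "y < 2*pi" for y
  proof -
    have "((\<lambda>r. vt y r) has_integral (v y s - v y a)) {a..s}"
    proof (rule fundamental_theorem_of_calculus_interior)
      show "continuous_on {a..s} (\<lambda>r. v y r)"
        using continuous_on_slice_t[OF V(1), of y] that s by (auto elim: continuous_on_subset)
      show "((\<lambda>r. v y r) has_vector_derivative vt y r) (at r)" if "r \<in> {a<..<s}" for r
        using V(7)[of y r] \<open>0 < y\<close> \<open>y < 2*pi\<close> that s
        by (simp add: has_real_derivative_iff_has_vector_derivative)
    qed (use s in simp)
    then show ?thesis by (simp add: integral_unique)
  qed
qed simp

lemma C21_time_DERIV:
  assumes C: "C21_derivs T v vx vxx vt" and x: "x \<in> {0..2*pi}" and t: "0 < t" "t < T"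
  shows "((\<lambda>s. v x s) has_real_derivative vt x t) (at t)"
proof -
  define a b where "a = t / 2" and "b = (t + T) / 2"
  have ab: "0 < a" "a < t" "t < b" "b < T" using t unfolding a_def b_def by auto
  have "continuous_on {a..b} (\<lambda>r. vt x r)"
    using continuous_on_slice_t[OF C21_derivsD(4)[OF C] x] ab by (auto elim: continuous_on_subset)
  then have "((\<lambda>s. v x a + integral {a..s} (\<lambda>r. vt x r)) has_real_derivative vt x t) (at t within {a..b})"
    using integral_has_real_derivative[of a b "\<lambda>r. vt x r" t] ab by (auto intro!: derivative_eq_intros)
  moreover have "v x a + integral {a..s} (\<lambda>r. vt x r) = v x s" if "s \<in> {a..b}" for s
    using C21_time_FTC[OF C x] ab that by simp
  ultimately have "((\<lambda>s. v x s) has_real_derivative vt x t) (at t within {a..b})"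
    using has_field_derivative_transform_within[OF _ zero_less_one, of _ _ t "{a..b}"] ab by force
  then show ?thesis using at_within_Icc_at[of a t b] ab by simp
qed

lemma C21_time_deriv_periodic:
  assumes C: "C21_derivs T v vx vxx vt" and bc: "\<And>t. 0 \<le> t \<Longrightarrow> t \<le> T \<Longrightarrow> v 0 t = v (2*pi) t"
    and t: "0 < t" "t < T"
  shows "vt 0 t = vt (2*pi) t"
proof -
  have "eventually (\<lambda>s. s \<in> {0<..<T}) (nhds t)" using t by (intro eventually_nhds_in_open) auto
  then have "eventually (\<lambda>s. v 0 s = v (2*pi) s) (nhds t)" by eventually_elim (use bc in auto)
  from DERIV_cong_ev[OF refl this refl, of "vt 0 t"]
  have "((\<lambda>s. v (2*pi) s) has_real_derivative vt 0 t) (at t)"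
    using C21_time_DERIV[OF C _ t, of 0] by simp
  then show ?thesis using C21_time_DERIV[OF C _ t, of "2*pi"] DERIV_unique by simp
qed

lemma C21_periodic_heat_solution:
  assumes C: "C21_derivs T v vx vxx vt"
    and eq: "\<And>x t. x \<in> {0..2*pi} \<Longrightarrow> t \<in> {0..T} \<Longrightarrow> vt x t - \<alpha> * vxx x t = g x t"
    and bc: "\<And>t. t \<in> {0..T} \<Longrightarrow> v 0 t = v (2*pi) t \<and> vx 0 t = vx (2*pi) t"
    and vxx_bc: "\<And>t. 0 < t \<Longrightarrow> t < T \<Longrightarrow> vxx 0 t = vxx (2*pi) t"
  shows "periodic_heat_solution \<alpha> T (\<lambda>x t. periodic_ext (\<lambda>y. v y t) x) (\<lambda>x t. periodic_ext (\<lambda>y. vx y t) x)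
    (\<lambda>x t. periodic_ext (\<lambda>y. vxx y t) x) (\<lambda>x t. periodic_ext (\<lambda>y. vt y t) x) (\<lambda>x t. periodic_ext (\<lambda>y. g y t) x)"
  unfolding periodic_heat_solution_def
proof (intro conjI allI impI)
  note V = C21_derivsD[OF C]
  show "continuous_on (UNIV \<times> {0..T}) (\<lambda>(x, t). periodic_ext (\<lambda>y. v y t) x)"
    by (rule continuous_on_periodic_ext[OF V(1)]) (use bc in auto)
  fix x t
  show "periodic_ext (\<lambda>y. v y t) (mod2pi x) = periodic_ext (\<lambda>y. v y t) x"
    by (simp add: periodic_ext_def)
  assume "0 < t \<and> t < T"
  then have t: "0 < t" "t < T" "t \<in> {0..T}" by auto
  show "((\<lambda>y. periodic_ext (\<lambda>y. v y t) y) has_real_derivative periodic_ext (\<lambda>y. vx y t) x) (at x)"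
    using periodic_ext_DERIV_of_interior[OF continuous_on_slice_x[OF V(1) t(3)]
        continuous_on_slice_x[OF V(2) t(3)] V(5)[OF _ _ t(1,2)]] bc[OF t(3)]
    by simp
  show "((\<lambda>y. periodic_ext (\<lambda>y. vx y t) y) has_real_derivative periodic_ext (\<lambda>y. vxx y t) x) (at x)"
    using periodic_ext_DERIV_of_interior[OF continuous_on_slice_x[OF V(2) t(3)]
        continuous_on_slice_x[OF V(3) t(3)] V(6)[OF _ _ t(1,2)]] bc[OF t(3)] vxx_bc[OF t(1,2)]
    by simp
  show "((\<lambda>s. periodic_ext (\<lambda>y. v y s) x) has_real_derivative periodic_ext (\<lambda>y. vt y t) x) (at t)"
    unfolding periodic_ext_def using C21_time_DERIV[OF C _ t(1,2)] mod2pi_bounds[of x] by simp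
  show "periodic_ext (\<lambda>y. vt y t) x - \<alpha> * periodic_ext (\<lambda>y. vxx y t) x = periodic_ext (\<lambda>y. g y t) x"
    unfolding periodic_ext_def using eq[of "mod2pi x" t] mod2pi_bounds[of x] t by simp
qed

lemma solves_linear_periodic_ext:
  assumes sol: "solves_linear \<alpha> T \<phi> g v" and "0 < \<alpha>"
    and g: "\<And>t. 0 < t \<Longrightarrow> t < T \<Longrightarrow> g 0 t = g (2*pi) t"
  obtains vx vxx vt where "C21_derivs T v vx vxx vt"
    "\<And>x t. x \<in> {0..2*pi} \<Longrightarrow> t \<in> {0..T} \<Longrightarrow> vt x t - \<alpha> * vxx x t = g x t"
    "\<And>t. t \<in> {0..T} \<Longrightarrow> v 0 t = v (2*pi) t" "\<And>x. x \<in> {0..2*pi} \<Longrightarrow> v x 0 = \<phi> x"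
    "periodic_heat_solution \<alpha> T (\<lambda>x t. periodic_ext (\<lambda>y. v y t) x) (\<lambda>x t. periodic_ext (\<lambda>y. vx y t) x)
       (\<lambda>x t. periodic_ext (\<lambda>y. vxx y t) x) (\<lambda>x t. periodic_ext (\<lambda>y. vt y t) x)
       (\<lambda>x t. periodic_ext (\<lambda>y. g y t) x)"
proof -
  obtain vx vxx vt where C: "C21_derivs T v vx vxx vt"
    and eq: "\<And>x t. x \<in> {0..2*pi} \<Longrightarrow> t \<in> {0..T} \<Longrightarrow> vt x t - \<alpha> * vxx x t = g x t"
    and init: "\<And>x. x \<in> {0..2*pi} \<Longrightarrow> v x 0 = \<phi> x"
    and bc: "\<And>t. t \<in> {0..T} \<Longrightarrow> v 0 t = v (2*pi) t \<and> vx 0 t = vx (2*pi) t"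
    using sol unfolding solves_linear_def by auto
  \<comment> \<open>The equation at both ends of the period transfers periodicity from \<open>vt\<close> and \<open>g\<close> to \<open>vxx\<close>.\<close>
  have "vxx 0 t = vxx (2*pi) t" if t: "0 < t" "t < T" for t
  proof -
    have "vt 0 t = vt (2*pi) t" using C21_time_deriv_periodic[OF C _ t] bc by simp
    moreover have "vt 0 t - \<alpha> * vxx 0 t = g 0 t" "vt (2*pi) t - \<alpha> * vxx (2*pi) t = g (2*pi) t"
      using eq[of 0 t] eq[of "2*pi" t] t by simp_all
    ultimately have "\<alpha> * vxx 0 t = \<alpha> * vxx (2*pi) t" using g[OF t] by linarith
    then show ?thesis using \<open>0 < \<alpha>\<close> by simp
  qed
  with C21_periodic_heat_solution[OF C eq bc] C eq bc init that show thesis by blast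
qed

lemma C21_derivs_unique:
  assumes C: "C21_derivs T v vx vxx vt" and C': "C21_derivs T v vx' vxx' vt'"
    and x: "0 < x" "x < 2*pi" and t: "0 < t" "t < T"
  shows "vx' x t = vx x t" "vxx' x t = vxx x t" "vt' x t = vt x t"
proof -
  note V = C21_derivsD[OF C] and V' = C21_derivsD[OF C']
  have vx: "vx' y t = vx y t" if "0 < y" "y < 2*pi" for y
    using DERIV_unique[OF V'(5)[OF that t] V(5)[OF that t]] .
  then show "vx' x t = vx x t" using x .
  have "eventually (\<lambda>y. y \<in> {0<..<2*pi}) (nhds x)" using x by (intro eventually_nhds_in_open) auto
  then have "eventually (\<lambda>y. vx' y t = vx y t) (nhds x)" by eventually_elim (use vx in auto)
  from DERIV_cong_ev[OF refl this refl, of "vxx' x t"]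
  have "((\<lambda>y. vx y t) has_real_derivative vxx' x t) (at x)" using V'(6)[OF x t] by simp
  then show "vxx' x t = vxx x t" using DERIV_unique V(6)[OF x t] by blast
  show "vt' x t = vt x t" using DERIV_unique[OF V'(7)[OF x t] V(7)[OF x t]] .
qed

lemma C21_norm_le:
  assumes C: "C21_derivs T w wx wxx wt" and "0 < T"
    and bound: "\<And>x t. 0 < x \<Longrightarrow> x < 2*pi \<Longrightarrow> 0 < t \<Longrightarrow> t < T \<Longrightarrow>
      \<bar>w x t\<bar> + \<bar>wx x t\<bar> + \<bar>wxx x t\<bar> + \<bar>wt x t\<bar> \<le> N"
  shows "C21_norm T w \<le> N"
proof -
  \<comment> \<open>The derivatives chosen in \<open>C21_norm\<close> agree with \<open>wx, wxx, wt\<close> in the interior,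
    and continuity carries the bound to the boundary.\<close>
  define d where "d = (SOME d. C21_derivs T w (fst d) (fst (snd d)) (snd (snd d)))"
  have "C21_derivs T w (fst d) (fst (snd d)) (snd (snd d))"
    unfolding d_def using C by (intro someI_ex[of "\<lambda>d. C21_derivs T w (fst d) (fst (snd d)) (snd (snd d))"]) auto
  note D = this C21_derivsD[OF this]
  let ?f = "\<lambda>p. \<bar>w (fst p) (snd p)\<bar> + \<bar>fst d (fst p) (snd p)\<bar> + \<bar>fst (snd d) (fst p) (snd p)\<bar>
    + \<bar>snd (snd d) (fst p) (snd p)\<bar>"
  have closure: "closure ({0<..<2*pi} \<times> {0<..<T}) = rect T"
    unfolding rect_def closure_Times using \<open>0 < T\<close> by simp
  have "continuous_on (closure ({0<..<2*pi} \<times> {0<..<T})) ?f"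
    using D(2-5) unfolding closure rect_def case_prod_beta by (intro continuous_intros)
  then have "?f p \<le> N" if "p \<in> rect T" for p
  proof (rule continuous_le_on_closure)
    show "p \<in> closure ({0<..<2*pi} \<times> {0<..<T})" using that closure by simp
    show "?f q \<le> N" if "q \<in> {0<..<2*pi} \<times> {0<..<T}" for q
      using bound[of "fst q" "snd q"] C21_derivs_unique[OF C D(1), of "fst q" "snd q"] that
      by (auto simp: mem_Times_iff)
  qed
  moreover have "rect T \<noteq> {}" unfolding rect_def using \<open>0 < T\<close> by auto
  ultimately show ?thesis
    unfolding C21_norm_def Let_def d_def[symmetric] by (intro cSUP_least) auto
qed

definition C11_slices :: "real \<Rightarrow> real \<Rightarrow> (real \<Rightarrow> real \<Rightarrow> real) \<Rightarrow> bool" where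
  "C11_slices T R w \<longleftrightarrow> (\<forall>t. 0 < t \<and> t < T \<longrightarrow>
     w 0 t = w (2*pi) t \<and> (\<exists>w'. C11_bounds (periodic_ext (\<lambda>x. w x t)) w' R R R))"

lemma linear_solution_estimate:
  assumes sol: "solves_linear \<alpha> T \<phi> g v" and "0 < \<alpha>" "0 < T"
    and g_bc: "\<And>t. 0 < t \<Longrightarrow> t < T \<Longrightarrow> g 0 t = g (2*pi) t"
    and forcing: "\<And>t. 0 < t \<Longrightarrow> t < T \<Longrightarrow> \<exists>g'. C11_bounds (periodic_ext (\<lambda>x. g x t)) g' G G G"
    and \<phi>C: "C11_bounds (periodic_ext \<phi>) \<phi>' P P P"
    and small: "P + G * T \<le> R" "2*pi * (2*P + 2*G*T) \<le> R"
  shows "C11_slices T R v \<and> C21_norm T v \<le> 3*R + \<alpha>*R + G"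
proof -
  obtain vx vxx vt where C: "C21_derivs T v vx vxx vt"
    and eq: "\<And>x t. x \<in> {0..2*pi} \<Longrightarrow> t \<in> {0..T} \<Longrightarrow> vt x t - \<alpha> * vxx x t = g x t"
    and bc: "\<And>t. t \<in> {0..T} \<Longrightarrow> v 0 t = v (2*pi) t"
    and init: "\<And>x. x \<in> {0..2*pi} \<Longrightarrow> v x 0 = \<phi> x"
    and per: "periodic_heat_solution \<alpha> T (\<lambda>x t. periodic_ext (\<lambda>y. v y t) x)
       (\<lambda>x t. periodic_ext (\<lambda>y. vx y t) x) (\<lambda>x t. periodic_ext (\<lambda>y. vxx y t) x)
       (\<lambda>x t. periodic_ext (\<lambda>y. vt y t) x) (\<lambda>x t. periodic_ext (\<lambda>y. g y t) x)"
    using solves_linear_periodic_ext[OF sol \<open>0 < \<alpha>\<close> g_bc] by blast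
  have "(\<lambda>x. periodic_ext (\<lambda>y. v y 0) x) = periodic_ext \<phi>"
    using init mod2pi_bounds by (auto simp: periodic_ext_def fun_eq_iff less_imp_le)
  then have init_C11: "C11_bounds (\<lambda>x. periodic_ext (\<lambda>y. v y 0) x) \<phi>' P P P" using \<phi>C by simp
  obtain g' where "C11_bounds (periodic_ext (\<lambda>x. g x (T/2))) g' G G G" using forcing[of "T/2"] \<open>0 < T\<close> by auto
  then have "0 \<le> G" by (rule C11_bounds_nonneg(1))
  then have "0 \<le> 2*P + 2*G*T" using C11_bounds_nonneg(1)[OF \<phi>C] \<open>0 < T\<close> by simp
  then have pi_scale: "1 * (2*P + 2*G*T) \<le> 2*pi * (2*P + 2*G*T)" using pi_gt3 by (intro mult_right_mono) auto
  have v_C11: "C11_bounds (\<lambda>x. periodic_ext (\<lambda>y. v y t) x) (\<lambda>x. periodic_ext (\<lambda>y. vx y t) x) R R R"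
    if t: "0 < t" "t < T" for t
    by (intro C11_bounds_mono[OF periodic_heat_solution_C11_estimate[OF per \<open>0 < \<alpha>\<close> init_C11 _ t]])
       (use forcing small pi_scale in auto)
  have "C11_slices T R v" unfolding C11_slices_def using v_C11 bc by fastforce
  moreover have "C21_norm T v \<le> 3*R + \<alpha>*R + G"
  proof (rule C21_norm_le[OF C \<open>0 < T\<close>])
    fix x t assume x: "0 < x" "x < 2*pi" and t: "0 < t" "t < T"
    have ext: "periodic_ext f x = f x" for f :: "real \<Rightarrow> real" by (rule periodic_ext_eq) (use x in auto)
    note V = C11_boundsD[OF v_C11[OF t]]
    have "\<bar>v x t\<bar> \<le> R" "\<bar>vx x t\<bar> \<le> R" using V(2,3)[of x] ext by simp_all
    moreover have "\<bar>vxx x t\<bar> \<le> R"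
      using DERIV_abs_le_lipschitz[OF periodic_heat_solutionD(4)[OF per t, where x=x] V(4)] ext by simp
    moreover obtain g' where "C11_bounds (periodic_ext (\<lambda>x. g x t)) g' G G G" using forcing[OF t] by blast
    from C11_boundsD(2)[OF this, of x] have "\<bar>g x t\<bar> \<le> G" using ext[of "\<lambda>y. g y t"] by simp
    moreover have "vt x t = \<alpha> * vxx x t + g x t" using eq[of x t] x t by simp
    moreover have "\<bar>\<alpha> * vxx x t\<bar> \<le> \<alpha> * R"
      using \<open>\<bar>vxx x t\<bar> \<le> R\<close> \<open>0 < \<alpha>\<close> by (simp add: abs_mult mult_left_mono)
    ultimately show "\<bar>v x t\<bar> + \<bar>vx x t\<bar> + \<bar>vxx x t\<bar> + \<bar>vt x t\<bar> \<le> 3*R + \<alpha>*R + G"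
      by linarith
  qed
  ultimately show ?thesis by simp
qed

section \<open>The iteration\<close>

lemma shifted_eq_periodic_ext:
  assumes h: "0 < h" "h < 2*pi" and x: "0 \<le> x" "x \<le> 2*pi"
  shows "shifted h w x t = periodic_ext (\<lambda>y. w y t) (x - h)"
proof (cases "x - h < 0")
  case True
  then have "mod2pi (x - h) = x - h + 2*pi" using mod2pi_eq[of "- 1" "x - h"] h x by simp
  then show ?thesis using True by (simp add: shifted_def periodic_ext_def)
next
  case False
  then have "mod2pi (x - h) = x - h" using mod2pi_id h x by simp
  then show ?thesis using False by (simp add: shifted_def periodic_ext_def)
qed

lemma Fop_periodic_ext:
  assumes h: "0 < h" "h < 2*pi"
  shows "periodic_ext (\<lambda>x. Fop k h w x t) x
    = periodic_ext (\<lambda>y. w y t) x * (periodic_ext k x * periodic_ext (\<lambda>y. w y t) (x - h) - fterm k h w t)"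
proof -
  have "shifted h w (mod2pi x) t = periodic_ext (\<lambda>y. w y t) (x - h)"
    using shifted_eq_periodic_ext[OF h, of "mod2pi x"] mod2pi_bounds[of x] mod2pi_add_mod2pi[of x "- h"]
    by (simp add: periodic_ext_def)
  then show ?thesis by (simp add: Fop_def periodic_ext_def)
qed

lemma fterm_bound:
  assumes h: "0 < h" "h < 2*pi" and w: "w 0 t = w (2*pi) t"
    and k: "\<And>x. x \<in> {0..2*pi} \<Longrightarrow> \<bar>k x\<bar> \<le> K"
    and R: "\<And>x. \<bar>periodic_ext (\<lambda>y. w y t) x\<bar> \<le> R"
  shows "\<bar>fterm k h w t\<bar> \<le> 2*pi * K * R^2"
proof -
  have "0 \<le> K" "0 \<le> R" using k[of 0] R[of 0] by auto
  have integrand: "norm (k x * w x t * shifted h w x t) \<le> K * R * R" if "x \<in> cbox 0 (2*pi)" for x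
  proof -
    have x: "0 \<le> x" "x \<le> 2*pi" using that by auto
    have "\<bar>w x t\<bar> \<le> R" using R[of x] periodic_ext_eq_closed[OF x, of "\<lambda>y. w y t"] w by simp
    moreover have "\<bar>shifted h w x t\<bar> \<le> R" using R shifted_eq_periodic_ext[OF h x] by simp
    ultimately show ?thesis using k[of x] x \<open>0 \<le> K\<close> \<open>0 \<le> R\<close> by (simp add: abs_mult mult_mono')
  qed
  show ?thesis
  proof (cases "(\<lambda>x. k x * w x t * shifted h w x t) integrable_on {0..2*pi}")
    case True
    then have "((\<lambda>x. k x * w x t * shifted h w x t) has_integral fterm k h w t) (cbox 0 (2*pi))"
      using integrable_integral[OF True] by (simp add: fterm_def cbox_interval)
    from has_integral_bound[OF _ this integrand] \<open>0 \<le> K\<close> \<open>0 \<le> R\<close> show ?thesis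
      by (simp add: power2_eq_square mult_ac)
  qed (use \<open>0 \<le> K\<close> in \<open>simp add: fterm_def not_integrable_integral\<close>)
qed

text \<open>The three constants produced by the product, difference and shift rules for
  \<open>u (k u(\<cdot> - h) - f[u])\<close> from bounds \<open>R\<close> on \<open>u\<close> and \<open>K\<close> on \<open>k\<close>.\<close>

lemma Fop_constants_le:
  fixes K R F :: real
  assumes "0 \<le> K" "1 \<le> R" "F \<le> 8 * K * R^2"
  shows "R * (K * R + F) \<le> 32 * K * R^3"
    "R * (K * R + F) + R * ((K * R + K * R) + 0) \<le> 32 * K * R^3"
    "R * (K * R + F) + 2 * R * ((K * R + K * R) + 0) + R * ((K * R + 2 * K * R + K * R) + 0)
       \<le> 32 * K * R^3"
proof -
  have "K * R^2 \<le> K * R^3" using assms by (intro mult_left_mono power_increasing) auto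
  moreover have "R * F \<le> 8 * K * R^3"
    using mult_left_mono[OF assms(3), of R] assms(2) by (simp add: power2_eq_square power3_eq_cube)
  moreover have "0 \<le> K * R^3" using assms by simp
  ultimately show "R * (K * R + F) \<le> 32 * K * R^3"
    "R * (K * R + F) + R * ((K * R + K * R) + 0) \<le> 32 * K * R^3"
    "R * (K * R + F) + 2 * R * ((K * R + K * R) + 0) + R * ((K * R + 2 * K * R + K * R) + 0)
       \<le> 32 * K * R^3"
    by (simp_all add: algebra_simps power2_eq_square)
qed

lemma Fop_C11_bounds:
  assumes h: "0 < h" "h < 2*pi" and w: "w 0 t = w (2*pi) t"
    and wC: "C11_bounds (periodic_ext (\<lambda>y. w y t)) w' R R R"
    and kC: "C11_bounds (periodic_ext k) k' K K K" and k: "k 0 = k (2*pi)" and "1 \<le> R"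
  shows "\<exists>g'. C11_bounds (periodic_ext (\<lambda>x. Fop k h w x t)) g' (32 * K * R^3) (32 * K * R^3) (32 * K * R^3)"
proof -
  let ?f = "fterm k h w t"
  have "0 \<le> K" using C11_bounds_nonneg[OF kC] by simp
  have kb: "\<bar>k x\<bar> \<le> K" if "x \<in> {0..2*pi}" for x
    using C11_boundsD(2)[OF kC, of x] periodic_ext_eq_closed[of x k] that k by simp
  have "\<bar>?f\<bar> \<le> 2*pi * K * R^2"
    by (rule fterm_bound[where w=w and t=t, OF h w]) (use kb C11_boundsD(2)[OF wC] in auto)
  also have "\<dots> \<le> 8 * K * R^2" using pi_less_4 \<open>0 \<le> K\<close> by (intro mult_right_mono) auto
  finally have F: "\<bar>?f\<bar> \<le> 8 * K * R^2" .
  have "C11_bounds (\<lambda>x. periodic_ext (\<lambda>y. w y t) x * (periodic_ext k x * periodic_ext (\<lambda>y. w y t) (x - h) - ?f))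
      (\<lambda>x. w' x * (periodic_ext k x * periodic_ext (\<lambda>y. w y t) (x - h) - ?f)
        + periodic_ext (\<lambda>y. w y t) x * ((k' x * periodic_ext (\<lambda>y. w y t) (x - h)
        + periodic_ext k x * w' (x - h)) - 0))
      (32 * K * R^3) (32 * K * R^3) (32 * K * R^3)"
    by (rule C11_bounds_mono[OF C11_bounds_mult[OF wC C11_bounds_diff[OF
          C11_bounds_mult[OF kC C11_bounds_shift[OF wC]] C11_bounds_const]]])
       (use Fop_constants_le[OF \<open>0 \<le> K\<close> \<open>1 \<le> R\<close> F] in auto)
  moreover have "periodic_ext (\<lambda>x. Fop k h w x t)
      = (\<lambda>x. periodic_ext (\<lambda>y. w y t) x * (periodic_ext k x * periodic_ext (\<lambda>y. w y t) (x - h) - ?f))"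
    by (intro ext Fop_periodic_ext[OF h])
  ultimately show ?thesis by auto
qed

lemma iteration_step:
  assumes h: "0 < h" "h < 2*pi" and "0 < \<alpha>" "0 < T"
    and kC: "C11_bounds (periodic_ext k) k' K K K" and k: "k 0 = k (2*pi)" and "1 \<le> R"
    and \<phi>C: "C11_bounds (periodic_ext \<phi>) \<phi>' P P P"
    and small: "P + 32 * K * R^3 * T \<le> R" "2*pi * (2*P + 2 * (32 * K * R^3) * T) \<le> R"
    and w: "C11_slices T R w" and sol: "solves_linear \<alpha> T \<phi> (Fop k h w) v"
  shows "C11_slices T R v \<and> C21_norm T v \<le> 3*R + \<alpha>*R + 32 * K * R^3"
proof (rule linear_solution_estimate[OF sol \<open>0 < \<alpha>\<close> \<open>0 < T\<close> _ _ \<phi>C small])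
  fix t assume t: "0 < t" "t < T"
  then obtain w' where w_bc: "w 0 t = w (2*pi) t" and "C11_bounds (periodic_ext (\<lambda>x. w x t)) w' R R R"
    using w unfolding C11_slices_def by blast
  then show "\<exists>g'. C11_bounds (periodic_ext (\<lambda>x. Fop k h w x t)) g' (32 * K * R^3) (32 * K * R^3) (32 * K * R^3)"
    by (intro Fop_C11_bounds[where w=w and t=t, OF h w_bc _ kC k \<open>1 \<le> R\<close>])
  show "Fop k h w 0 t = Fop k h w (2*pi) t" using w_bc k h by (simp add: Fop_def shifted_def)
qed

lemma smallness_conditions:
  fixes P K T :: real
  assumes "0 \<le> P" and small: "512 * T * K * (17 * P + 1)^3 \<le> 1"
  shows "P + 32 * K * (17 * P + 1)^3 * T \<le> 17 * P + 1"
    and "2*pi * (2*P + 2 * (32 * K * (17 * P + 1)^3) * T) \<le> 17 * P + 1"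
proof -
  have "32 * K * (17 * P + 1)^3 * T \<le> 1/16" using small by (simp add: algebra_simps)
  then show "P + 32 * K * (17 * P + 1)^3 * T \<le> 17 * P + 1" using \<open>0 \<le> P\<close> by simp
  have "2*pi * (2*P + 2 * (32 * K * (17 * P + 1)^3) * T) \<le> 2*pi * (2*P + 1/8)"
    using \<open>_ \<le> 1/16\<close> by (intro mult_left_mono) auto
  also have "\<dots> = pi * (4*P + 1/4)" by (simp add: algebra_simps)
  also have "\<dots> \<le> 4 * (4*P + 1/4)" using pi_less_4 \<open>0 \<le> P\<close> by (intro mult_right_mono) auto
  finally show "2*pi * (2*P + 2 * (32 * K * (17 * P + 1)^3) * T) \<le> 17 * P + 1"
    using \<open>0 \<le> P\<close> by simp
qed

lemma iterates_C21_bounded: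
  assumes h: "0 < h" "h < 2*pi" and "0 < \<alpha>" "0 < T"
    and kC: "C11_bounds (periodic_ext k) k' K K K" and k: "k 0 = k (2*pi)"
    and \<phi>C: "C11_bounds (periodic_ext \<phi>) \<phi>' P P P" and \<phi>: "\<phi> 0 = \<phi> (2*pi)"
    and small: "512 * T * K * (17 * P + 1)^3 \<le> 1"
    and u0: "\<forall>x\<in>{0..2*pi}. \<forall>t\<in>{0..T}. u 0 x t = \<phi> x"
    and sol: "\<forall>m. solves_linear \<alpha> T \<phi> (Fop k h (u m)) (u (Suc m))"
  shows "\<exists>M. \<forall>m. C21_norm T (u m) \<le> M"
proof -
  define R where "R = 17 * P + 1"
  have "0 \<le> P" using C11_bounds_nonneg(1)[OF \<phi>C] .
  then have "1 \<le> R" "P \<le> R" unfolding R_def by simp_all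
  note step = iteration_step[OF h \<open>0 < \<alpha>\<close> \<open>0 < T\<close> kC k \<open>1 \<le> R\<close> \<phi>C
      smallness_conditions[OF \<open>0 \<le> P\<close> small, folded R_def]]
  have "C11_slices T R (u m)" for m
  proof (induction m)
    case 0
    have "periodic_ext (\<lambda>x. u 0 x t) = periodic_ext \<phi>" if "0 < t" "t < T" for t
      using u0 mod2pi_bounds that by (auto simp: periodic_ext_def fun_eq_iff less_imp_le)
    then show ?case
      unfolding C11_slices_def using C11_bounds_mono[OF \<phi>C] \<open>P \<le> R\<close> u0 \<phi> by fastforce
  next
    case (Suc m)
    then show ?case using step sol by blast
  qed
  then have "C21_norm T (u (Suc m)) \<le> 3*R + \<alpha>*R + 32 * K * R^3" for m using step sol by blast
  then have "C21_norm T (u m) \<le> max (C21_norm T (u 0)) (3*R + \<alpha>*R + 32 * K * R^3)" for m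
    by (cases m) (auto simp: le_max_iff_disj)
  then show ?thesis by blast
qed

theorem lemma2:
  fixes h \<alpha> T :: real
    and \<phi> \<phi>1 \<phi>2 :: "real \<Rightarrow> real"
  assumes h: "0 < h" "h < 2*pi"
    and \<alpha>: "0 < \<alpha>"
    and T: "0 < T"
    and \<phi>_d1: "\<And>x. x \<in> {-h..2*pi} \<Longrightarrow> (\<phi> has_real_derivative \<phi>1 x) (at x within {-h..2*pi})"
    and \<phi>_d2: "\<And>x. x \<in> {-h..2*pi} \<Longrightarrow> (\<phi>1 has_real_derivative \<phi>2 x) (at x within {-h..2*pi})"
    and \<phi>_c2: "continuous_on {-h..2*pi} \<phi>2"
    and \<phi>_nonneg: "\<And>x. x \<in> {-h..2*pi} \<Longrightarrow> 0 \<le> \<phi> x"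
    and \<phi>_int: "integral {0..2*pi} \<phi> = 1"
    and \<phi>_per: "\<And>x. x \<in> {-h..0} \<Longrightarrow> \<phi> x = \<phi> (x + 2*pi)"
  shows "\<exists>\<delta>>0. \<forall>(k::real \<Rightarrow> real) k1 k2 (u::nat \<Rightarrow> real \<Rightarrow> real \<Rightarrow> real).
     (\<forall>x\<in>{0..2*pi}. (k has_real_derivative k1 x) (at x within {0..2*pi})) \<longrightarrow>
     (\<forall>x\<in>{0..2*pi}. (k1 has_real_derivative k2 x) (at x within {0..2*pi})) \<longrightarrow>
     continuous_on {0..2*pi} k2 \<longrightarrow>
     (\<forall>x\<in>{0..2*pi}. 0 < k x) \<longrightarrow>
     k 0 = k (2*pi) \<longrightarrow> k1 0 = k1 (2*pi) \<longrightarrow>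
     (SUP x\<in>{0..2*pi}. max \<bar>k x\<bar> (max \<bar>k1 x\<bar> \<bar>k2 x\<bar>)) < \<delta> \<longrightarrow>
     (\<forall>x\<in>{0..2*pi}. \<forall>t\<in>{0..T}. u 0 x t = \<phi> x) \<longrightarrow>
     (\<forall>m. solves_linear \<alpha> T \<phi> (Fop k h (u m)) (u (Suc m))) \<longrightarrow>
     (\<exists>M. \<forall>m. C21_norm T (u m) \<le> M)"
proof -
  have sub: "{0..2*pi} \<subseteq> {-h..2*pi}" using h by auto
  define P where "P = (SUP x\<in>{0..2*pi}. max \<bar>\<phi> x\<bar> (max \<bar>\<phi>1 x\<bar> \<bar>\<phi>2 x\<bar>))"
  have \<phi>C: "C11_bounds (periodic_ext \<phi>) (periodic_ext \<phi>1) P P P"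
    unfolding P_def using h \<phi>_per[of 0] DERIV_endpoints_eq_of_periodic[OF \<phi>_d1 \<phi>_per]
    by (intro C11_bounds_periodic_ext_Sup continuous_on_subset[OF \<phi>_c2 sub] DERIV_subset[OF _ sub]
        \<phi>_d1 \<phi>_d2) auto
  define \<delta> where "\<delta> = 1 / (512 * T * (17 * P + 1)^3)"
  have "0 \<le> P" using C11_bounds_nonneg(1)[OF \<phi>C] .
  then have "0 < \<delta>" "512 * T * \<delta> * (17 * P + 1)^3 = 1" using T unfolding \<delta>_def by simp_all
  show ?thesis
  proof (rule exI[of _ \<delta>], intro conjI allI impI)
    fix k k1 k2 :: "real \<Rightarrow> real" and u :: "nat \<Rightarrow> real \<Rightarrow> real \<Rightarrow> real"
    assume "\<forall>x\<in>{0..2*pi}. (k has_real_derivative k1 x) (at x within {0..2*pi})"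
      and "\<forall>x\<in>{0..2*pi}. (k1 has_real_derivative k2 x) (at x within {0..2*pi})"
      and "continuous_on {0..2*pi} k2" and "\<forall>x\<in>{0..2*pi}. 0 < k x" and "k 0 = k (2*pi)"
      and "k1 0 = k1 (2*pi)" and "(SUP x\<in>{0..2*pi}. max \<bar>k x\<bar> (max \<bar>k1 x\<bar> \<bar>k2 x\<bar>)) < \<delta>"
      and "\<forall>x\<in>{0..2*pi}. \<forall>t\<in>{0..T}. u 0 x t = \<phi> x"
      and "\<forall>m. solves_linear \<alpha> T \<phi> (Fop k h (u m)) (u (Suc m))"
    moreover from this have "C11_bounds (periodic_ext k) (periodic_ext k1) \<delta> \<delta> \<delta>"
      by (intro C11_bounds_mono[OF C11_bounds_periodic_ext_Sup]) auto
    ultimately show "\<exists>M. \<forall>m. C21_norm T (u m) \<le> M"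
      using iterates_C21_bounded[OF h \<alpha> T _ _ \<phi>C] \<phi>_per[of 0] h \<open>512 * T * \<delta> * _ = 1\<close> by auto
  qed (rule \<open>0 < \<delta>\<close>)
qed

end
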